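(* Let $k$ be a commutative ring, $(H,\alpha)$ a monoidal Hom-Hopf algebra with bijective antipode $S$, $(A,\beta)$ a right $(H,\alpha)$-Hom-comodule algebra, and $\phi:H\to A$ a total integral. Suppose that for all $g,h\in H$, $g\,\phi(h)_{[1]}\otimes\phi(h)_{[0]}=\phi(h)_{[1]}\,g\otimes\phi(h)_{[0]}$ and $\phi(h)\in Z(A)$ (the center of $A$). Then $\theta:H\otimes H\to A$, $\theta(g\otimes h)=\phi(hS^{-1}(g))$, is a normalized $(A,\beta)$-integral.
   Context: Hom-category: objects $(M,\mu)$ with $\mu$ a $k$-linear automorphism; morphisms commute with the automorphisms. Monoidal Hom-algebra $(A,\alpha)$: $\alpha(ab)=\alpha(a)\alpha(b)$, $\alpha(1_A)=1_A$, $\alpha(a)(bc)=(ab)\alpha(c)$, $a1_A=1_Aa=\alpha(a)$. Monoidal Hom-coalgebra $(C,\gamma)$: $\Delta(c)=c_{(1)}\otimes c_{(2)}$, $\varepsilon$, $\Delta\gamma=(\gamma\otimes\gamma)\Delta$, $\varepsilon\gamma=\varepsilon$, $\gamma^{-1}(c_{(1)})\otimes c_{(2)(1)}\otimes c_{(2)(2)}=c_{(1)(1)}\otimes c_{(1)(2)}\otimes\gamma(c_{(2)})$, $\varepsilon(c_{(1)})c_{(2)}=\varepsilon(c_{(2)})c_{(1)}=\gamma^{-1}(c)$. Monoidal Hom-Hopf algebra $(H,\alpha)$: both, $\Delta,\varepsilon$ multiplicative and unital, antipode $S$ with $S(h_{(1)})h_{(2)}=h_{(1)}S(h_{(2)})=\varepsilon(h)1_H$,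 $S\alpha=\alpha S$. Right $(H,\alpha)$-Hom-comodule $(M,\mu)$: $\rho(m)=m_{[0]}\otimes m_{[1]}$, $m_{[0][0]}\otimes m_{[0][1]}\otimes\alpha^{-1}(m_{[1]})=\mu^{-1}(m_{[0]})\otimes\Delta(m_{[1]})$, $m_{[0]}\varepsilon(m_{[1]})=\mu^{-1}(m)$, $\rho(\mu(m))=\mu(m_{[0]})\otimes\alpha(m_{[1]})$. Right Hom-comodule algebra $(A,\beta)$: monoidal Hom-algebra and right $(H,\alpha)$-Hom-comodule with $\rho(ab)=a_{[0]}b_{[0]}\otimes a_{[1]}b_{[1]}$, $\rho(1_A)=1_A\otimes1_H$. Total integral: $k$-linear $\phi:H\to A$ with $\rho_A\phi=(\phi\otimes\mathrm{id}_H)\Delta$, $\phi\alpha=\beta\phi$, $\phi(1_H)=1_A$. Normalized $(A,\beta)$-integral: $k$-linear $\theta:H\otimes H\to A$ with $\theta(\alpha\otimes\alpha)=\beta\theta$ such that for all $g,h\in H$, $a\in A$: (i) $\theta(\alpha^{-1}(g)\otimes h_{(1)})\otimes\alpha(h_{(2)})=\beta(\theta(g_{(2)}\otimes\alpha^{-1}(h))_{[0]})\otimes g_{(1)}\theta(g_{(2)}\otimes\alpha^{-1}(h))_{[1]}$; (ii) $\theta(h_{(1)}\otimes h_{(2)})=\varepsilon(h)1_A$; (iii) $\beta^2(a_{[0][0]})\theta(\alpha^{-1}(g)a_{[0][1]}\otimes\alpha^{-1}(h)\alpha^{-1}(a_{[1]}))=\theta(g\otimes h)a$. *)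

theory Defs
  imports Complex_Main
begin

text \<open>Modules over a commutative ring 'k are types of class ab_group_add with an
explicit scalar multiplication (locale module from HOL). Tensor products are
built as the free 'k-module on pairs (triples) modulo the k-multilinearity
relations; an element of a tensor product is represented by a finite formal
sum, i.e. a list of pairs (triples), scalars being absorbed into the first factor.\<close>

definition klin :: "('k::comm_ring_1 \<Rightarrow> 'a::ab_group_add \<Rightarrow> 'a) \<Rightarrow> ('k \<Rightarrow> 'b::ab_group_add \<Rightarrow> 'b) \<Rightarrow> ('a \<Rightarrow> 'b) \<Rightarrow> bool" where
  "klin s t f \<longleftrightarrow> (\<forall>x y. f (x + y) = f x + f y) \<and> (\<forall>c x. f (s c x) = t c (f x))"

definition bilin :: "('k::comm_ring_1 \<Rightarrow> 'a::ab_group_add \<Rightarrow> 'a) \<Rightarrow> ('k \<Rightarrow> 'b::ab_group_add \<Rightarrow> 'b)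
    \<Rightarrow> ('k \<Rightarrow> 'c::ab_group_add \<Rightarrow> 'c) \<Rightarrow> ('a \<Rightarrow> 'b \<Rightarrow> 'c) \<Rightarrow> bool" where
  "bilin s1 s2 t f \<longleftrightarrow> (\<forall>x. klin s2 t (f x)) \<and> (\<forall>y. klin s1 t (\<lambda>x. f x y))"

inductive_set kspan :: "('x \<Rightarrow> 'k::comm_ring_1) set \<Rightarrow> ('x \<Rightarrow> 'k) set" for R where
  zero: "(\<lambda>_. 0) \<in> kspan R"
| step: "r \<in> R \<Longrightarrow> f \<in> kspan R \<Longrightarrow> (\<lambda>p. c * r p + f p) \<in> kspan R"

definition dl :: "'x \<Rightarrow> 'x \<Rightarrow> 'k::comm_ring_1" where
  "dl x = (\<lambda>p. if p = x then 1 else 0)"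

definition fsum :: "'x list \<Rightarrow> 'x \<Rightarrow> 'k::comm_ring_1" where
  "fsum xs = (\<lambda>p. of_nat (count_list xs p))"

definition tensor2_rel :: "('k::comm_ring_1 \<Rightarrow> 'a::ab_group_add \<Rightarrow> 'a) \<Rightarrow> ('k \<Rightarrow> 'b::ab_group_add \<Rightarrow> 'b)
    \<Rightarrow> ('a \<times> 'b \<Rightarrow> 'k) set" where
  "tensor2_rel s1 s2 =
     {(\<lambda>p. dl (m + m', n) p - dl (m, n) p - dl (m', n) p) | m m' n. True}
   \<union> {(\<lambda>p. dl (m, n + n') p - dl (m, n) p - dl (m, n') p) | m n n'. True}
   \<union> {(\<lambda>p. dl (s1 c m, n) p - c * dl (m, n) p) | c m n. True}
   \<union> {(\<lambda>p. dl (m, s2 c n) p - c * dl (m, n) p) | c m n. True}"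

definition tensor_eq2 :: "('k::comm_ring_1 \<Rightarrow> 'a::ab_group_add \<Rightarrow> 'a) \<Rightarrow> ('k \<Rightarrow> 'b::ab_group_add \<Rightarrow> 'b)
    \<Rightarrow> ('a \<times> 'b) list \<Rightarrow> ('a \<times> 'b) list \<Rightarrow> bool" where
  "tensor_eq2 s1 s2 xs ys \<longleftrightarrow>
     (\<lambda>p. (fsum xs p :: 'k) - fsum ys p) \<in> kspan (tensor2_rel s1 s2)"

definition tensor3_rel :: "('k::comm_ring_1 \<Rightarrow> 'a::ab_group_add \<Rightarrow> 'a) \<Rightarrow> ('k \<Rightarrow> 'b::ab_group_add \<Rightarrow> 'b)
    \<Rightarrow> ('k \<Rightarrow> 'c::ab_group_add \<Rightarrow> 'c) \<Rightarrow> ('a \<times> 'b \<times> 'c \<Rightarrow> 'k) set" where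
  "tensor3_rel s1 s2 s3 =
     {(\<lambda>p. dl (m + m', n, q) p - dl (m, n, q) p - dl (m', n, q) p) | m m' n q. True}
   \<union> {(\<lambda>p. dl (m, n + n', q) p - dl (m, n, q) p - dl (m, n', q) p) | m n n' q. True}
   \<union> {(\<lambda>p. dl (m, n, q + q') p - dl (m, n, q) p - dl (m, n, q') p) | m n q q'. True}
   \<union> {(\<lambda>p. dl (s1 c m, n, q) p - c * dl (m, n, q) p) | c m n q. True}
   \<union> {(\<lambda>p. dl (m, s2 c n, q) p - c * dl (m, n, q) p) | c m n q. True}
   \<union> {(\<lambda>p. dl (m, n, s3 c q) p - c * dl (m, n, q) p) | c m n q. True}"

definition tensor_eq3 :: "('k::comm_ring_1 \<Rightarrow> 'a::ab_group_add \<Rightarrow> 'a) \<Rightarrow> ('k \<Rightarrow> 'b::ab_group_add \<Rightarrow> 'b)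
    \<Rightarrow> ('k \<Rightarrow> 'c::ab_group_add \<Rightarrow> 'c) \<Rightarrow> ('a \<times> 'b \<times> 'c) list \<Rightarrow> ('a \<times> 'b \<times> 'c) list \<Rightarrow> bool" where
  "tensor_eq3 s1 s2 s3 xs ys \<longleftrightarrow>
     (\<lambda>p. (fsum xs p :: 'k) - fsum ys p) \<in> kspan (tensor3_rel s1 s2 s3)"

text \<open>A k-linear map from M into M1 \<otimes> M2, given on representatives.\<close>
definition klin_t2 :: "('k::comm_ring_1 \<Rightarrow> 'm::ab_group_add \<Rightarrow> 'm) \<Rightarrow> ('k \<Rightarrow> 'a::ab_group_add \<Rightarrow> 'a)
    \<Rightarrow> ('k \<Rightarrow> 'b::ab_group_add \<Rightarrow> 'b) \<Rightarrow> ('m \<Rightarrow> ('a \<times> 'b) list) \<Rightarrow> bool" where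
  "klin_t2 s s1 s2 D \<longleftrightarrow>
     (\<forall>x y. tensor_eq2 s1 s2 (D (x + y)) (D x @ D y)) \<and>
     (\<forall>c x. tensor_eq2 s1 s2 (D (s c x)) (map (\<lambda>(u, v). (s1 c u, v)) (D x)))"

definition hom_algebra :: "('k::comm_ring_1 \<Rightarrow> 'a::ab_group_add \<Rightarrow> 'a) \<Rightarrow> ('a \<Rightarrow> 'a \<Rightarrow> 'a) \<Rightarrow> 'a \<Rightarrow> ('a \<Rightarrow> 'a) \<Rightarrow> bool" where
  "hom_algebra s m one \<alpha> \<longleftrightarrow>
     module s \<and> klin s s \<alpha> \<and> bij \<alpha> \<and> bilin s s s m \<and>
     (\<forall>a b. \<alpha> (m a b) = m (\<alpha> a) (\<alpha> b)) \<and> \<alpha> one = one \<and>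
     (\<forall>a b c. m (\<alpha> a) (m b c) = m (m a b) (\<alpha> c)) \<and>
     (\<forall>a. m a one = \<alpha> a \<and> m one a = \<alpha> a)"

definition hom_coalgebra :: "('k::comm_ring_1 \<Rightarrow> 'c::ab_group_add \<Rightarrow> 'c) \<Rightarrow> ('c \<Rightarrow> ('c \<times> 'c) list)
    \<Rightarrow> ('c \<Rightarrow> 'k) \<Rightarrow> ('c \<Rightarrow> 'c) \<Rightarrow> bool" where
  "hom_coalgebra s D e \<gamma> \<longleftrightarrow>
     module s \<and> klin s s \<gamma> \<and> bij \<gamma> \<and> klin_t2 s s s D \<and> klin s (*) e \<and>
     (\<forall>c. tensor_eq2 s s (D (\<gamma> c)) (map (\<lambda>(x, y). (\<gamma> x, \<gamma> y)) (D c))) \<and>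
     (\<forall>c. e (\<gamma> c) = e c) \<and>
     (\<forall>c. tensor_eq3 s s s
           (concat (map (\<lambda>(x, y). map (\<lambda>(u, v). (inv \<gamma> x, u, v)) (D y)) (D c)))
           (concat (map (\<lambda>(x, y). map (\<lambda>(u, v). (u, v, \<gamma> y)) (D x)) (D c)))) \<and>
     (\<forall>c. sum_list (map (\<lambda>(x, y). s (e x) y) (D c)) = inv \<gamma> c \<and>
          sum_list (map (\<lambda>(x, y). s (e y) x) (D c)) = inv \<gamma> c)"

definition hom_hopf :: "('k::comm_ring_1 \<Rightarrow> 'h::ab_group_add \<Rightarrow> 'h) \<Rightarrow> ('h \<Rightarrow> 'h \<Rightarrow> 'h) \<Rightarrow> 'h
    \<Rightarrow> ('h \<Rightarrow> ('h \<times> 'h) list) \<Rightarrow> ('h \<Rightarrow> 'k) \<Rightarrow> ('h \<Rightarrow> 'h) \<Rightarrow> ('h \<Rightarrow> 'h) \<Rightarrow> bool" where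
  "hom_hopf s m one D e S \<alpha> \<longleftrightarrow>
     hom_algebra s m one \<alpha> \<and> hom_coalgebra s D e \<alpha> \<and>
     (\<forall>g h. tensor_eq2 s s (D (m g h))
        (concat (map (\<lambda>(x, y). map (\<lambda>(x', y'). (m x x', m y y')) (D h)) (D g)))) \<and>
     tensor_eq2 s s (D one) [(one, one)] \<and>
     (\<forall>g h. e (m g h) = e g * e h) \<and> e one = 1 \<and>
     klin s s S \<and>
     (\<forall>h. sum_list (map (\<lambda>(x, y). m (S x) y) (D h)) = s (e h) one \<and>
          sum_list (map (\<lambda>(x, y). m x (S y)) (D h)) = s (e h) one) \<and>
     (\<forall>h. S (\<alpha> h) = \<alpha> (S h))"

definition hom_comodule :: "('k::comm_ring_1 \<Rightarrow> 'h::ab_group_add \<Rightarrow> 'h) \<Rightarrow> ('h \<Rightarrow> ('h \<times> 'h) list)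
    \<Rightarrow> ('h \<Rightarrow> 'k) \<Rightarrow> ('h \<Rightarrow> 'h) \<Rightarrow> ('k \<Rightarrow> 'm::ab_group_add \<Rightarrow> 'm) \<Rightarrow> ('m \<Rightarrow> ('m \<times> 'h) list)
    \<Rightarrow> ('m \<Rightarrow> 'm) \<Rightarrow> bool" where
  "hom_comodule sH D e \<alpha> sM \<rho> \<mu> \<longleftrightarrow>
     module sM \<and> klin sM sM \<mu> \<and> bij \<mu> \<and> klin_t2 sM sM sH \<rho> \<and>
     (\<forall>m. tensor_eq3 sM sH sH
        (concat (map (\<lambda>(x, y). map (\<lambda>(u, v). (u, v, inv \<alpha> y)) (\<rho> x)) (\<rho> m)))
        (concat (map (\<lambda>(x, y). map (\<lambda>(p, q). (inv \<mu> x, p, q)) (D y)) (\<rho> m)))) \<and>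
     (\<forall>m. sum_list (map (\<lambda>(x, y). sM (e y) x) (\<rho> m)) = inv \<mu> m) \<and>
     (\<forall>m. tensor_eq2 sM sH (\<rho> (\<mu> m)) (map (\<lambda>(x, y). (\<mu> x, \<alpha> y)) (\<rho> m)))"

definition hom_comodule_algebra :: "('k::comm_ring_1 \<Rightarrow> 'h::ab_group_add \<Rightarrow> 'h) \<Rightarrow> ('h \<Rightarrow> 'h \<Rightarrow> 'h) \<Rightarrow> 'h
    \<Rightarrow> ('h \<Rightarrow> ('h \<times> 'h) list) \<Rightarrow> ('h \<Rightarrow> 'k) \<Rightarrow> ('h \<Rightarrow> 'h)
    \<Rightarrow> ('k \<Rightarrow> 'a::ab_group_add \<Rightarrow> 'a) \<Rightarrow> ('a \<Rightarrow> 'a \<Rightarrow> 'a) \<Rightarrow> 'a \<Rightarrow> ('a \<Rightarrow> ('a \<times> 'h) list)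
    \<Rightarrow> ('a \<Rightarrow> 'a) \<Rightarrow> bool" where
  "hom_comodule_algebra sH mH oneH D e \<alpha> sA mA oneA \<rho> \<beta> \<longleftrightarrow>
     hom_algebra sA mA oneA \<beta> \<and> hom_comodule sH D e \<alpha> sA \<rho> \<beta> \<and>
     (\<forall>a b. tensor_eq2 sA sH (\<rho> (mA a b))
        (concat (map (\<lambda>(x, y). map (\<lambda>(x', y'). (mA x x', mH y y')) (\<rho> b)) (\<rho> a)))) \<and>
     tensor_eq2 sA sH (\<rho> oneA) [(oneA, oneH)]"

definition total_integral :: "('k::comm_ring_1 \<Rightarrow> 'h::ab_group_add \<Rightarrow> 'h) \<Rightarrow> 'h
    \<Rightarrow> ('h \<Rightarrow> ('h \<times> 'h) list) \<Rightarrow> ('h \<Rightarrow> 'h)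
    \<Rightarrow> ('k \<Rightarrow> 'a::ab_group_add \<Rightarrow> 'a) \<Rightarrow> 'a \<Rightarrow> ('a \<Rightarrow> ('a \<times> 'h) list) \<Rightarrow> ('a \<Rightarrow> 'a)
    \<Rightarrow> ('h \<Rightarrow> 'a) \<Rightarrow> bool" where
  "total_integral sH oneH D \<alpha> sA oneA \<rho> \<beta> \<phi> \<longleftrightarrow>
     klin sH sA \<phi> \<and>
     (\<forall>h. tensor_eq2 sA sH (\<rho> (\<phi> h)) (map (\<lambda>(x, y). (\<phi> x, y)) (D h))) \<and>
     (\<forall>h. \<phi> (\<alpha> h) = \<beta> (\<phi> h)) \<and> \<phi> oneH = oneA"

text \<open>A k-linear map H \<otimes> H \<rightarrow> A is given as a k-bilinear map H \<Rightarrow> H \<Rightarrow> A.\<close>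
definition normalized_integral :: "('k::comm_ring_1 \<Rightarrow> 'h::ab_group_add \<Rightarrow> 'h) \<Rightarrow> ('h \<Rightarrow> 'h \<Rightarrow> 'h)
    \<Rightarrow> ('h \<Rightarrow> ('h \<times> 'h) list) \<Rightarrow> ('h \<Rightarrow> 'k) \<Rightarrow> ('h \<Rightarrow> 'h)
    \<Rightarrow> ('k \<Rightarrow> 'a::ab_group_add \<Rightarrow> 'a) \<Rightarrow> ('a \<Rightarrow> 'a \<Rightarrow> 'a) \<Rightarrow> 'a \<Rightarrow> ('a \<Rightarrow> ('a \<times> 'h) list)
    \<Rightarrow> ('a \<Rightarrow> 'a) \<Rightarrow> ('h \<Rightarrow> 'h \<Rightarrow> 'a) \<Rightarrow> bool" where
  "normalized_integral sH mH D e \<alpha> sA mA oneA \<rho> \<beta> \<theta> \<longleftrightarrow>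
     bilin sH sH sA \<theta> \<and>
     (\<forall>g h. \<theta> (\<alpha> g) (\<alpha> h) = \<beta> (\<theta> g h)) \<and>
     (\<forall>g h. tensor_eq2 sA sH
        (map (\<lambda>(x, y). (\<theta> (inv \<alpha> g) x, \<alpha> y)) (D h))
        (concat (map (\<lambda>(x, y). map (\<lambda>(u, v). (\<beta> u, mH x v)) (\<rho> (\<theta> y (inv \<alpha> h)))) (D g)))) \<and>
     (\<forall>h. sum_list (map (\<lambda>(x, y). \<theta> x y) (D h)) = sA (e h) oneA) \<and>
     (\<forall>g h a. sum_list (concat (map (\<lambda>(x, y). map (\<lambda>(u, v).
          mA (\<beta> (\<beta> u)) (\<theta> (mH (inv \<alpha> g) v) (mH (inv \<alpha> h) (inv \<alpha> y)))) (\<rho> x)) (\<rho> a)))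
        = mA (\<theta> g h) a)"

definition center :: "('a \<Rightarrow> 'a \<Rightarrow> 'a) \<Rightarrow> 'a set" where
  "center m = {a. \<forall>b. m a b = m b a}"

end

theory Submission
  imports Defs "HOL-Library.Function_Algebras"
begin

text \<open>With both counit laws normalised to \<open>\<alpha>\<^sup>-\<^sup>1\<close>, the Hom-coassociativity axiom forces \<open>\<alpha>\<close> to be
  an involution. Hence the untwisted product \<open>a \<cdot> b = \<alpha> (a b)\<close> turns \<open>H\<close> into an ordinary Hopf
  algebra with antipode \<open>S\<close>, in which \<open>S\<close> (and so \<open>S\<^sup>-\<^sup>1\<close>) is anti-multiplicative and
  anti-comultiplicative. Normalisation of \<open>\<theta>\<close> is then the antipode identity for \<open>S\<^sup>-\<^sup>1\<close>; the
  \<open>A\<close>-linearity condition follows from coassociativity and counitality of the coaction together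
  with the centrality of \<open>\<phi>(h)\<close>; and the colinearity condition from the colinearity of \<open>\<phi>\<close>,
  multiplicativity of \<open>\<Delta>\<close>, the formula for \<open>\<Delta> \<circ> S\<^sup>-\<^sup>1\<close> and the commutation hypothesis on
  the coaction of \<open>\<phi>(h)\<close>.\<close>

subsection \<open>Formal sums and tensor equality\<close>

definition coeff_supp :: "('x \<Rightarrow> 'k::comm_ring_1) \<Rightarrow> 'x set" where
  "coeff_supp c = {p. c p \<noteq> 0}"

text \<open>The tensor products of the definitions are quotients of formal sums, i.e. finitely supported
  coefficient functions; a map out of them is computed by evaluating formal sums along a map on
  the generators.\<close>

definition formal_eval :: "('k::comm_ring_1 \<Rightarrow> 'v::ab_group_add \<Rightarrow> 'v) \<Rightarrow> ('x \<Rightarrow> 'v) \<Rightarrow> ('x \<Rightarrow> 'k) \<Rightarrow> 'v" where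
  "formal_eval t f c = (\<Sum>p\<in>coeff_supp c. t (c p) (f p))"

definition formal_lincomb :: "('k::comm_ring_1 \<times> 'x) list \<Rightarrow> 'x \<Rightarrow> 'k" where
  "formal_lincomb ws = (\<lambda>p. sum_list (map (\<lambda>(k, x). if x = p then k else 0) ws))"

lemma formal_lincomb_Nil [simp]: "formal_lincomb [] = (\<lambda>_. 0)"
  by (simp add: formal_lincomb_def)

lemma formal_lincomb_Cons [simp]:
  "formal_lincomb ((k, x) # ws) p = (if x = p then k else 0) + formal_lincomb ws p"
  by (simp add: formal_lincomb_def)

lemma coeff_supp_formal_lincomb: "coeff_supp (formal_lincomb ws) \<subseteq> snd ` set ws"
  by (induction ws) (auto simp: coeff_supp_def split: if_splits)

lemma finite_coeff_supp_formal_lincomb: "finite (coeff_supp (formal_lincomb ws))"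
  using coeff_supp_formal_lincomb by (rule finite_subset) simp

lemma fsum_diff_eq_formal_lincomb:
  "(\<lambda>p. fsum xs p - fsum ys p) = formal_lincomb (map (Pair 1) xs @ map (Pair (-1)) ys)"
proof -
  have "formal_lincomb (map (Pair (-1)) ys) p = - fsum ys p" for p
    by (induction ys) (auto simp: fsum_def)
  then have "formal_lincomb (map (Pair 1) xs @ map (Pair (-1)) ys) p = fsum xs p - fsum ys p" for p
    by (induction xs) (auto simp: fsum_def)
  then show ?thesis by (intro ext) (rule sym)
qed

lemma dl_diff3_eq_formal_lincomb: "(\<lambda>p. dl a p - dl b p - dl c p) = formal_lincomb [(1, a), (-1, b), (-1, c)]"
  by (auto simp: fun_eq_iff dl_def)

lemma dl_diff2_eq_formal_lincomb: "(\<lambda>p. dl a p - k * dl b p) = formal_lincomb [(1, a), (-k, b)]"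
  by (auto simp: fun_eq_iff dl_def)

context module
begin

lemma formal_eval_superset:
  "finite T \<Longrightarrow> coeff_supp c \<subseteq> T \<Longrightarrow> formal_eval scale f c = (\<Sum>p\<in>T. scale (c p) (f p))"
  unfolding formal_eval_def by (rule sum.mono_neutral_left) (auto simp: coeff_supp_def)

lemma formal_eval_formal_lincomb:
  "formal_eval scale f (formal_lincomb ws) = (\<Sum>(k, x)\<leftarrow>ws. scale k (f x))"
proof -
  have "(\<Sum>p\<in>T. scale (formal_lincomb ws p) (f p)) = (\<Sum>(k, x)\<leftarrow>ws. scale k (f x))"
    if "finite T" "snd ` set ws \<subseteq> T" for T
    using that
  proof (induction ws)
    case (Cons w ws)
    obtain k x where w: "w = (k, x)" by force
    have "(\<Sum>p\<in>T. scale (formal_lincomb (w # ws) p) (f p)) =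
          (\<Sum>p\<in>T. if x = p then scale k (f p) else 0) + (\<Sum>p\<in>T. scale (formal_lincomb ws p) (f p))"
      by (simp add: w scale_left_distrib sum.distrib[symmetric] cong: if_cong) (rule sum.cong, auto)
    then show ?case using Cons by (simp add: w)
  qed simp
  then show ?thesis
    by (simp add: formal_eval_superset[of "snd ` set ws"] coeff_supp_formal_lincomb)
qed

lemma formal_eval_kspan:
  assumes N: "subspace N"
    and R: "\<And>r. r \<in> R \<Longrightarrow> finite (coeff_supp r) \<and> formal_eval scale f r \<in> N"
    and c: "c \<in> kspan R"
  shows "finite (coeff_supp c) \<and> formal_eval scale f c \<in> N"
  using c
proof (induction c rule: kspan.induct)
  case zero
  then show ?case using N by (simp add: formal_eval_def coeff_supp_def subspace_0)
next
  case (step r g c)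
  let ?T = "coeff_supp r \<union> coeff_supp g"
  have r: "finite (coeff_supp r)" "formal_eval scale f r \<in> N" using R step by auto
  have T: "finite ?T" "coeff_supp (\<lambda>p. c * r p + g p) \<subseteq> ?T"
    using r step by (auto simp: coeff_supp_def)
  have "formal_eval scale f (\<lambda>p. c * r p + g p) = scale c (formal_eval scale f r) + formal_eval scale f g"
    using T by (simp add: formal_eval_superset[of ?T] scale_left_distrib sum.distrib scale_sum_right)
  then show ?case using T r step N by (auto intro: finite_subset simp: subspace_add subspace_scale)
qed

lemma kspan_image_in_subspace:
  assumes N: "subspace N"
    and eq: "(\<lambda>p. (fsum xs p :: 'a) - fsum ys p) \<in> kspan R"
    and R: "\<And>r. r \<in> R \<Longrightarrow> \<exists>ws. r = formal_lincomb ws \<and> (\<Sum>(k, x)\<leftarrow>ws. scale k (f x)) \<in> N"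
  shows "sum_list (map f xs) - sum_list (map f ys) \<in> N"
proof -
  have "formal_eval scale f (\<lambda>p. fsum xs p - fsum ys p) \<in> N"
    using formal_eval_kspan[OF N _ eq] R
    by (metis finite_coeff_supp_formal_lincomb formal_eval_formal_lincomb)
  moreover have "(\<Sum>(k, x)\<leftarrow>map (Pair c) zs. scale k (f x)) = scale c (sum_list (map f zs))" for c zs
    by (induction zs) (simp_all add: scale_right_distrib)
  ultimately show ?thesis
    by (simp add: fsum_diff_eq_formal_lincomb formal_eval_formal_lincomb del: map_map)
qed

lemma tensor_eq2_image_in_subspace:
  assumes N: "subspace N" and eq: "tensor_eq2 s1 s2 xs ys"
    and "\<And>m m' n. f (m + m', n) - f (m, n) - f (m', n) \<in> N"
    and "\<And>m n n'. f (m, n + n') - f (m, n) - f (m, n') \<in> N"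
    and "\<And>c m n. f (s1 c m, n) - scale c (f (m, n)) \<in> N"
    and "\<And>c m n. f (m, s2 c n) - scale c (f (m, n)) \<in> N"
  shows "sum_list (map f xs) - sum_list (map f ys) \<in> N"
  apply (rule kspan_image_in_subspace[OF N eq[unfolded tensor_eq2_def]])
  unfolding tensor2_rel_def
  apply (elim UnE CollectE exE conjE)
  subgoal for r m m' n using assms(3)
    by (intro exI[of _ "[(1, (m + m', n)), (-1, (m, n)), (-1, (m', n))]"]) (simp add: dl_diff3_eq_formal_lincomb; simp add: algebra_simps)
  subgoal for r m n n' using assms(4)
    by (intro exI[of _ "[(1, (m, n + n')), (-1, (m, n)), (-1, (m, n'))]"]) (simp add: dl_diff3_eq_formal_lincomb; simp add: algebra_simps)
  subgoal for r c m n using assms(5)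
    by (intro exI[of _ "[(1, (s1 c m, n)), (-c, (m, n))]"]) (simp add: dl_diff2_eq_formal_lincomb)
  subgoal for r c m n using assms(6)
    by (intro exI[of _ "[(1, (m, s2 c n)), (-c, (m, n))]"]) (simp add: dl_diff2_eq_formal_lincomb)
  done

lemma tensor_eq3_image_in_subspace:
  assumes N: "subspace N" and eq: "tensor_eq3 s1 s2 s3 xs ys"
    and "\<And>m m' n q. f (m + m', n, q) - f (m, n, q) - f (m', n, q) \<in> N"
    and "\<And>m n n' q. f (m, n + n', q) - f (m, n, q) - f (m, n', q) \<in> N"
    and "\<And>m n q q'. f (m, n, q + q') - f (m, n, q) - f (m, n, q') \<in> N"
    and "\<And>c m n q. f (s1 c m, n, q) - scale c (f (m, n, q)) \<in> N"
    and "\<And>c m n q. f (m, s2 c n, q) - scale c (f (m, n, q)) \<in> N"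
    and "\<And>c m n q. f (m, n, s3 c q) - scale c (f (m, n, q)) \<in> N"
  shows "sum_list (map f xs) - sum_list (map f ys) \<in> N"
  apply (rule kspan_image_in_subspace[OF N eq[unfolded tensor_eq3_def]])
  unfolding tensor3_rel_def
  apply (elim UnE CollectE exE conjE)
  subgoal for r m m' n q using assms(3)
    by (intro exI[of _ "[(1, (m + m', n, q)), (-1, (m, n, q)), (-1, (m', n, q))]"]) (simp add: dl_diff3_eq_formal_lincomb; simp add: algebra_simps)
  subgoal for r m n n' q using assms(4)
    by (intro exI[of _ "[(1, (m, n + n', q)), (-1, (m, n, q)), (-1, (m, n', q))]"]) (simp add: dl_diff3_eq_formal_lincomb; simp add: algebra_simps)
  subgoal for r m n q q' using assms(5)
    by (intro exI[of _ "[(1, (m, n, q + q')), (-1, (m, n, q)), (-1, (m, n, q'))]"]) (simp add: dl_diff3_eq_formal_lincomb; simp add: algebra_simps)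
  subgoal for r c m n q using assms(6)
    by (intro exI[of _ "[(1, (s1 c m, n, q)), (-c, (m, n, q))]"]) (simp add: dl_diff2_eq_formal_lincomb)
  subgoal for r c m n q using assms(7)
    by (intro exI[of _ "[(1, (m, s2 c n, q)), (-c, (m, n, q))]"]) (simp add: dl_diff2_eq_formal_lincomb)
  subgoal for r c m n q using assms(8)
    by (intro exI[of _ "[(1, (m, n, s3 c q)), (-c, (m, n, q))]"]) (simp add: dl_diff2_eq_formal_lincomb)
  done

end

definition trilin :: "('k::comm_ring_1 \<Rightarrow> 'a::ab_group_add \<Rightarrow> 'a) \<Rightarrow> ('k \<Rightarrow> 'b::ab_group_add \<Rightarrow> 'b)
    \<Rightarrow> ('k \<Rightarrow> 'c::ab_group_add \<Rightarrow> 'c) \<Rightarrow> ('k \<Rightarrow> 'd::ab_group_add \<Rightarrow> 'd) \<Rightarrow> ('a \<Rightarrow> 'b \<Rightarrow> 'c \<Rightarrow> 'd) \<Rightarrow> bool" where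
  "trilin s1 s2 s3 t f \<longleftrightarrow>
     (\<forall>y z. klin s1 t (\<lambda>x. f x y z)) \<and> (\<forall>x z. klin s2 t (\<lambda>y. f x y z)) \<and> (\<forall>x y. klin s3 t (f x y))"

lemma klin_add: "klin s t f \<Longrightarrow> f (x + y) = f x + f y"
  by (simp add: klin_def)

lemma klin_scale: "klin s t f \<Longrightarrow> f (s c x) = t c (f x)"
  by (simp add: klin_def)

lemma klin_zero: "klin s t f \<Longrightarrow> f 0 = 0"
  unfolding klin_def by (metis add_cancel_right_right)

lemma klin_id: "klin s s (\<lambda>x. x)"
  by (simp add: klin_def)

lemma klin_comp: "klin t1 t2 g \<Longrightarrow> klin s t1 f \<Longrightarrow> klin s t2 (\<lambda>x. g (f x))"
  unfolding klin_def by auto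

lemma klin_inv: "bij f \<Longrightarrow> klin s t f \<Longrightarrow> klin t s (inv f)"
  unfolding klin_def by (metis bij_inv_eq_iff)

lemma klin_scale_right: "module t \<Longrightarrow> klin s t f \<Longrightarrow> klin s t (\<lambda>x. t c (f x))"
  unfolding klin_def by (auto simp: module.scale_right_distrib module.scale_left_commute)

lemma klin_scale_left: "module t \<Longrightarrow> klin s (*) g \<Longrightarrow> klin s t (\<lambda>x. t (g x) v)"
  unfolding klin_def by (auto simp: module.scale_left_distrib module.scale_scale)

lemma klin_sum_list:
  "module t \<Longrightarrow> (\<And>u v. klin s t (\<lambda>x. g x u v)) \<Longrightarrow> klin s t (\<lambda>x. \<Sum>(u, v)\<leftarrow>ys. g x u v)"
  unfolding klin_def
  by (induction ys) (auto simp: module.scale_right_distrib module.scale_zero_right algebra_simps)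

lemma bilinI: "(\<And>x. klin s2 t (f x)) \<Longrightarrow> (\<And>y. klin s1 t (\<lambda>x. f x y)) \<Longrightarrow> bilin s1 s2 t f"
  by (simp add: bilin_def)

lemma trilinI:
  "(\<And>y z. klin s1 t (\<lambda>x. f x y z)) \<Longrightarrow> (\<And>x z. klin s2 t (\<lambda>y. f x y z)) \<Longrightarrow>
   (\<And>x y. klin s3 t (f x y)) \<Longrightarrow> trilin s1 s2 s3 t f"
  by (simp add: trilin_def)

lemma bilin_klin_left: "bilin s1 s2 t f \<Longrightarrow> klin s1 t (\<lambda>x. f x y)"
  by (simp add: bilin_def)

lemma bilin_klin_right: "bilin s1 s2 t f \<Longrightarrow> klin s2 t (f x)"
  by (simp add: bilin_def)

lemma bilin_scale_left: "bilin s1 s2 t f \<Longrightarrow> f (s1 c x) y = t c (f x y)"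
  by (simp add: bilin_def klin_def)

lemma bilin_scale_right: "bilin s1 s2 t f \<Longrightarrow> f x (s2 c y) = t c (f x y)"
  by (simp add: bilin_def klin_def)

lemma klin_bilin_left: "bilin t1 t2 t3 m \<Longrightarrow> klin s t1 f \<Longrightarrow> klin s t3 (\<lambda>x. m (f x) c)"
  unfolding bilin_def klin_def by auto

lemma klin_bilin_right: "bilin t1 t2 t3 m \<Longrightarrow> klin s t2 f \<Longrightarrow> klin s t3 (\<lambda>x. m c (f x))"
  unfolding bilin_def klin_def by auto

lemma sum_list_klin: "klin s t f \<Longrightarrow> (\<Sum>(u, v)\<leftarrow>xs. f (g u v)) = f (\<Sum>(u, v)\<leftarrow>xs. g u v)"
  by (induction xs) (auto simp: klin_add klin_zero)

lemma sum_list_bilin_left: "bilin s1 s2 t m \<Longrightarrow> (\<Sum>(u, v)\<leftarrow>xs. m (g u v) w) = m (\<Sum>(u, v)\<leftarrow>xs. g u v) w"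
  by (rule sum_list_klin[OF bilin_klin_left])

lemma sum_list_bilin_right: "bilin s1 s2 t m \<Longrightarrow> (\<Sum>(u, v)\<leftarrow>xs. m w (g u v)) = m w (\<Sum>(u, v)\<leftarrow>xs. g u v)"
  by (rule sum_list_klin[OF bilin_klin_right])

lemma sum_list_scale_right: "module s \<Longrightarrow> (\<Sum>(u, v)\<leftarrow>xs. s c (g u v)) = s c (\<Sum>(u, v)\<leftarrow>xs. g u v)"
  by (induction xs) (auto simp: module.scale_right_distrib module.scale_zero_right)

lemma sum_list_scale_left: "module s \<Longrightarrow> (\<Sum>(u, v)\<leftarrow>xs. s (g u v) w) = s (\<Sum>(u, v)\<leftarrow>xs. g u v) w"
  by (induction xs) (auto simp: module.scale_left_distrib module.scale_zero_left)

lemma sum_list_swap: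
  fixes f :: "_ \<Rightarrow> _ \<Rightarrow> _ \<Rightarrow> _ \<Rightarrow> 'a::comm_monoid_add"
  shows "(\<Sum>(x, y)\<leftarrow>xs. \<Sum>(u, v)\<leftarrow>ys. f x y u v) = (\<Sum>(u, v)\<leftarrow>ys. \<Sum>(x, y)\<leftarrow>xs. f x y u v)"
  by (induction xs) (auto simp: sum_list_addf case_prod_beta')

lemma sum_list_concat_map: "sum_list (concat (map f xs)) = (\<Sum>x\<leftarrow>xs. sum_list (f x))"
  by (induction xs) auto

lemma sum_list_concat_pairs:
  "(\<Sum>(x, y)\<leftarrow>concat (map (\<lambda>(u, v). G u v) L). f x y) = (\<Sum>(u, v)\<leftarrow>L. \<Sum>(x, y)\<leftarrow>G u v. f x y)"
  by (induction L) auto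

lemma sum_list_concat_triples:
  "(\<Sum>(x, y, z)\<leftarrow>concat (map (\<lambda>(u, v). G u v) L). f x y z) = (\<Sum>(u, v)\<leftarrow>L. \<Sum>(x, y, z)\<leftarrow>G u v. f x y z)"
  by (induction L) auto

lemma sum_list_map_pairs:
  "(\<Sum>(x, y)\<leftarrow>map (\<lambda>(u, v). (a u v, b u v)) L. f x y) = (\<Sum>(u, v)\<leftarrow>L. f (a u v) (b u v))"
  by (induction L) auto

lemma sum_list_map_triples:
  "(\<Sum>(x, y, z)\<leftarrow>map (\<lambda>(u, v). (a u v, b u v, c u v)) L. f x y z) = (\<Sum>(u, v)\<leftarrow>L. f (a u v) (b u v) (c u v))"
  by (induction L) auto

lemma sum_list_map_Pair: "(\<Sum>(x, y, z)\<leftarrow>map (Pair a) L. f x y z) = (\<Sum>(u, v)\<leftarrow>L. f a u v)"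
  by (induction L) auto

subsection \<open>Calculus of tensor equality\<close>

lemma tensor_eq2_sum_bilin:
  assumes "module t" and g: "bilin s1 s2 t g" and "tensor_eq2 s1 s2 xs ys"
  shows "(\<Sum>(x, y)\<leftarrow>xs. g x y) = (\<Sum>(x, y)\<leftarrow>ys. g x y)"
proof -
  interpret module t by fact
  have "(\<Sum>(x, y)\<leftarrow>xs. g x y) - (\<Sum>(x, y)\<leftarrow>ys. g x y) \<in> {0}"
    by (rule tensor_eq2_image_in_subspace[OF subspace_single_0 assms(3)])
       (use g in \<open>auto simp: bilin_def klin_def\<close>)
  then show ?thesis by simp
qed

lemma tensor_eq3_sum_trilin:
  assumes "module t" and g: "trilin s1 s2 s3 t g" and "tensor_eq3 s1 s2 s3 xs ys"
  shows "(\<Sum>(x, y, z)\<leftarrow>xs. g x y z) = (\<Sum>(x, y, z)\<leftarrow>ys. g x y z)"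
proof -
  interpret module t by fact
  have "(\<Sum>(x, y, z)\<leftarrow>xs. g x y z) - (\<Sum>(x, y, z)\<leftarrow>ys. g x y z) \<in> {0}"
    by (rule tensor_eq3_image_in_subspace[OF subspace_single_0 assms(3)])
       (use g in \<open>auto simp: trilin_def klin_def\<close>)
  then show ?thesis by simp
qed

lemma module_pointwise: "module (\<lambda>(c::'k::comm_ring_1) (g::'x \<Rightarrow> 'k) p. c * g p)"
  by unfold_locales (auto simp: fun_eq_iff algebra_simps)

lemma kspan_base: "r \<in> R \<Longrightarrow> r \<in> kspan R"
  using kspan.step[OF _ kspan.zero, of r R 1] by simp

lemma kspan_add: "a \<in> kspan R \<Longrightarrow> b \<in> kspan R \<Longrightarrow> (\<lambda>p. a p + b p) \<in> kspan R"
proof (induction a rule: kspan.induct)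
  case (step r f c)
  have "(\<lambda>p. c * r p + f p + b p) = (\<lambda>p. c * r p + (f p + b p))" by (simp add: algebra_simps)
  then show ?case using kspan.step[OF step.hyps(1) step.IH[OF step.prems], of c] by simp
qed simp

lemma kspan_smult: "a \<in> kspan R \<Longrightarrow> (\<lambda>p. c * a p) \<in> kspan R"
proof (induction a rule: kspan.induct)
  case (step r f d)
  have "(\<lambda>p. c * (d * r p + f p)) = (\<lambda>p. (c * d) * r p + c * f p)" by (simp add: algebra_simps)
  then show ?case using kspan.step[OF step.hyps(1) step.IH, of "c * d"] by simp
qed (simp add: kspan.zero)

lemma kspan_diff: "a \<in> kspan R \<Longrightarrow> b \<in> kspan R \<Longrightarrow> (\<lambda>p. a p - b p) \<in> kspan R"
  using kspan_add[of a R "\<lambda>p. (-1) * b p"] kspan_smult[of b R "-1"] by simp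

lemma subspace_kspan: "module.subspace (\<lambda>(c::'k::comm_ring_1) (g::'x \<Rightarrow> 'k) p. c * g p) (kspan R)"
  unfolding module.subspace_def[OF module_pointwise]
  using kspan.zero kspan_add kspan_smult by (auto simp: plus_fun_def zero_fun_def)

lemma fsum_Nil [simp]: "fsum [] = (\<lambda>_. 0)"
  by (simp add: fsum_def)

lemma fsum_Cons: "fsum (x # xs) = (\<lambda>p. dl x p + fsum xs p)"
  by (auto simp: fsum_def dl_def fun_eq_iff)

lemma fsum_append: "fsum (xs @ ys) = (\<lambda>p. fsum xs p + fsum ys p)"
  by (auto simp: fsum_def fun_eq_iff)

lemma fsum_concat: "fsum (concat (map F xs)) = (\<Sum>x\<leftarrow>xs. fsum (F x))"
  by (induction xs) (auto simp: fsum_append plus_fun_def)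

lemma tensor_eq2_refl: "tensor_eq2 s1 s2 xs xs"
  by (simp add: tensor_eq2_def kspan.zero)

lemma tensor_eq2_if_fsum_eq: "fsum xs = (fsum ys :: _ \<Rightarrow> 'k) \<Longrightarrow> tensor_eq2 s1 s2 xs ys"
  for s1 :: "'k::comm_ring_1 \<Rightarrow> _"
  by (simp add: tensor_eq2_def kspan.zero)

lemma tensor_eq2_fsum_cong:
  "fsum ys = (fsum zs :: _ \<Rightarrow> 'k) \<Longrightarrow> tensor_eq2 s1 s2 xs ys \<Longrightarrow> tensor_eq2 s1 s2 xs zs"
  for s1 :: "'k::comm_ring_1 \<Rightarrow> _"
  by (simp add: tensor_eq2_def)

lemma tensor_eq2_sym: "tensor_eq2 s1 s2 xs ys \<Longrightarrow> tensor_eq2 s1 s2 ys xs"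
  unfolding tensor_eq2_def using kspan_smult[of _ _ "-1"] by fastforce

lemma tensor_eq2_trans [trans]:
  "tensor_eq2 s1 s2 xs ys \<Longrightarrow> tensor_eq2 s1 s2 ys zs \<Longrightarrow> tensor_eq2 s1 s2 xs zs"
  unfolding tensor_eq2_def using kspan_add by fastforce

lemma tensor_eq2_append:
  "tensor_eq2 s1 s2 xs ys \<Longrightarrow> tensor_eq2 s1 s2 xs' ys' \<Longrightarrow> tensor_eq2 s1 s2 (xs @ xs') (ys @ ys')"
  unfolding tensor_eq2_def using kspan_add by (fastforce simp: fsum_append algebra_simps)

lemma tensor_eq2_concat:
  "(\<And>z. z \<in> set zs \<Longrightarrow> tensor_eq2 s1 s2 (P z) (Q z)) \<Longrightarrow>
   tensor_eq2 s1 s2 (concat (map P zs)) (concat (map Q zs))"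
  by (induction zs) (auto simp: tensor_eq2_refl tensor_eq2_append)

lemma tensor_eq2_concat_swap:
  fixes s1 :: "'k::comm_ring_1 \<Rightarrow> _"
  shows "tensor_eq2 s1 s2 (concat (map (\<lambda>(x, y). concat (map (\<lambda>(a, b). f x y a b) B)) A))
                          (concat (map (\<lambda>(a, b). concat (map (\<lambda>(x, y). f x y a b) A)) B))"
proof (rule tensor_eq2_if_fsum_eq)
  have "fsum (concat (map (\<lambda>(x, y). concat (map (\<lambda>(a, b). f x y a b) B)) A)) =
        (\<Sum>(x, y)\<leftarrow>A. \<Sum>(a, b)\<leftarrow>B. (fsum (f x y a b) :: _ \<Rightarrow> 'k))"
    by (simp add: fsum_concat case_prod_beta')
  also have "\<dots> = (\<Sum>(a, b)\<leftarrow>B. \<Sum>(x, y)\<leftarrow>A. fsum (f x y a b))"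
    by (rule sum_list_swap)
  also have "\<dots> = fsum (concat (map (\<lambda>(a, b). concat (map (\<lambda>(x, y). f x y a b) A)) B))"
    by (simp add: fsum_concat case_prod_beta')
  finally show "fsum (concat (map (\<lambda>(x, y). concat (map (\<lambda>(a, b). f x y a b) B)) A)) =
        (fsum (concat (map (\<lambda>(a, b). concat (map (\<lambda>(x, y). f x y a b) A)) B)) :: _ \<Rightarrow> 'k)" .
qed

lemma tensor_eq2_add_left: "tensor_eq2 s1 s2 [(a + a', b)] [(a, b), (a', b)]"
proof -
  have "(\<lambda>p. dl (a + a', b) p - dl (a, b) p - dl (a', b) p) \<in> tensor2_rel s1 s2"
    unfolding tensor2_rel_def by blast
  then show ?thesis unfolding tensor_eq2_def
    by (auto simp: fsum_Cons algebra_simps dest: kspan_base)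
qed

lemma tensor_eq2_add_right: "tensor_eq2 s1 s2 [(a, b + b')] [(a, b), (a, b')]"
proof -
  have "(\<lambda>p. dl (a, b + b') p - dl (a, b) p - dl (a, b') p) \<in> tensor2_rel s1 s2"
    unfolding tensor2_rel_def by blast
  then show ?thesis unfolding tensor_eq2_def
    by (auto simp: fsum_Cons algebra_simps dest: kspan_base)
qed

lemma tensor_eq2_scale_swap: "tensor_eq2 s1 s2 [(a, s2 c b)] [(s1 c a, b)]"
proof -
  have "(\<lambda>p. dl (a, s2 c b) p - c * dl (a, b) p) \<in> tensor2_rel s1 s2"
       "(\<lambda>p. dl (s1 c a, b) p - c * dl (a, b) p) \<in> tensor2_rel s1 s2"
    unfolding tensor2_rel_def by blast+
  then have "(\<lambda>p. (dl (a, s2 c b) p - c * dl (a, b) p) - (dl (s1 c a, b) p - c * dl (a, b) p))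
      \<in> kspan (tensor2_rel s1 s2)"
    by (intro kspan_diff kspan_base)
  then show ?thesis unfolding tensor_eq2_def
    by (auto simp: fsum_Cons algebra_simps)
qed

lemma kspan_tensor2_scale:
  "(\<lambda>p. fsum (map (\<lambda>(u, v). (s1 c u, v)) ys) p - (c::'k::comm_ring_1) * fsum ys p) \<in> kspan (tensor2_rel s1 s2)"
proof (induction ys)
  case (Cons y ys)
  obtain u v where y: "y = (u, v)" by force
  have rel: "(\<lambda>p. dl (s1 c u, v) p - c * dl (u, v) p) \<in> tensor2_rel s1 s2"
    unfolding tensor2_rel_def by blast
  have "(\<lambda>p. fsum (map (\<lambda>(u, v). (s1 c u, v)) (y # ys)) p - c * fsum (y # ys) p)
     = (\<lambda>p. 1 * (dl (s1 c u, v) p - c * dl (u, v) p) + (fsum (map (\<lambda>(u, v). (s1 c u, v)) ys) p - c * fsum ys p))"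
    by (simp add: y fsum_Cons algebra_simps)
  then show ?case using kspan.step[OF rel Cons.IH, of 1] by simp
qed (simp add: kspan.zero)

lemma tensor_eq2_zero_left: "tensor_eq2 s1 s2 [(0, b)] []"
proof -
  have "(\<lambda>p. fsum [(0, b)] p - fsum [(0, b), (0, b)] p) \<in> kspan (tensor2_rel s1 s2)"
    using tensor_eq2_add_left[of s1 s2 0 0 b] unfolding tensor_eq2_def by simp
  from kspan_smult[OF this, of "-1"] show ?thesis
    unfolding tensor_eq2_def by (simp add: fsum_Cons)
qed

lemma tensor_eq2_zero_right: "tensor_eq2 s1 s2 [(a, 0)] []"
proof -
  have "(\<lambda>p. fsum [(a, 0)] p - fsum [(a, 0), (a, 0)] p) \<in> kspan (tensor2_rel s1 s2)"
    using tensor_eq2_add_right[of s1 s2 a 0 0] unfolding tensor_eq2_def by simp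
  from kspan_smult[OF this, of "-1"] show ?thesis
    unfolding tensor_eq2_def by (simp add: fsum_Cons)
qed

lemma tensor_eq2_sum_left:
  "tensor_eq2 s1 s2 (concat (map (\<lambda>(u, v). [(f u v, b)]) L)) [(\<Sum>(u, v)\<leftarrow>L. f u v, b)]"
proof (induction L)
  case Nil
  then show ?case using tensor_eq2_sym[OF tensor_eq2_zero_left] by simp
next
  case (Cons a L)
  obtain u v where a: "a = (u, v)" by force
  have "tensor_eq2 s1 s2 ((f u v, b) # concat (map (\<lambda>(u, v). [(f u v, b)]) L)) [(f u v, b), (\<Sum>(u, v)\<leftarrow>L. f u v, b)]"
    using tensor_eq2_append[OF tensor_eq2_refl Cons.IH, of "[(f u v, b)]"] by simp
  also have "tensor_eq2 s1 s2 \<dots> [(f u v + (\<Sum>(u, v)\<leftarrow>L. f u v), b)]"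
    by (rule tensor_eq2_sym[OF tensor_eq2_add_left])
  finally show ?case by (simp add: a)
qed

lemma tensor_eq2_sum_right:
  "tensor_eq2 s1 s2 (concat (map (\<lambda>(u, v). [(b, f u v)]) L)) [(b, \<Sum>(u, v)\<leftarrow>L. f u v)]"
proof (induction L)
  case Nil
  then show ?case using tensor_eq2_sym[OF tensor_eq2_zero_right] by simp
next
  case (Cons a L)
  obtain u v where a: "a = (u, v)" by force
  have "tensor_eq2 s1 s2 ((b, f u v) # concat (map (\<lambda>(u, v). [(b, f u v)]) L)) [(b, f u v), (b, \<Sum>(u, v)\<leftarrow>L. f u v)]"
    using tensor_eq2_append[OF tensor_eq2_refl Cons.IH, of "[(b, f u v)]"] by simp
  also have "tensor_eq2 s1 s2 \<dots> [(b, f u v + (\<Sum>(u, v)\<leftarrow>L. f u v))]"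
    by (rule tensor_eq2_sym[OF tensor_eq2_add_right])
  finally show ?case by (simp add: a)
qed

definition bilin_t2 :: "('k::comm_ring_1 \<Rightarrow> 'a::ab_group_add \<Rightarrow> 'a) \<Rightarrow> ('k \<Rightarrow> 'b::ab_group_add \<Rightarrow> 'b)
    \<Rightarrow> ('k \<Rightarrow> 'c::ab_group_add \<Rightarrow> 'c) \<Rightarrow> ('k \<Rightarrow> 'd::ab_group_add \<Rightarrow> 'd) \<Rightarrow> ('a \<Rightarrow> 'b \<Rightarrow> ('c \<times> 'd) list) \<Rightarrow> bool" where
  "bilin_t2 s1 s2 t1 t2 F \<longleftrightarrow> (\<forall>y. klin_t2 s1 t1 t2 (\<lambda>x. F x y)) \<and> (\<forall>x. klin_t2 s2 t1 t2 (F x))"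

definition trilin_t2 :: "('k::comm_ring_1 \<Rightarrow> 'a::ab_group_add \<Rightarrow> 'a) \<Rightarrow> ('k \<Rightarrow> 'b::ab_group_add \<Rightarrow> 'b)
    \<Rightarrow> ('k \<Rightarrow> 'e::ab_group_add \<Rightarrow> 'e) \<Rightarrow> ('k \<Rightarrow> 'c::ab_group_add \<Rightarrow> 'c) \<Rightarrow> ('k \<Rightarrow> 'd::ab_group_add \<Rightarrow> 'd)
    \<Rightarrow> ('a \<Rightarrow> 'b \<Rightarrow> 'e \<Rightarrow> ('c \<times> 'd) list) \<Rightarrow> bool" where
  "trilin_t2 s1 s2 s3 t1 t2 F \<longleftrightarrow>
     (\<forall>y z. klin_t2 s1 t1 t2 (\<lambda>x. F x y z)) \<and> (\<forall>x z. klin_t2 s2 t1 t2 (\<lambda>y. F x y z)) \<and>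
     (\<forall>x y. klin_t2 s3 t1 t2 (F x y))"

lemma bilin_t2I:
  "(\<And>y. klin_t2 s1 t1 t2 (\<lambda>x. F x y)) \<Longrightarrow> (\<And>x. klin_t2 s2 t1 t2 (F x)) \<Longrightarrow> bilin_t2 s1 s2 t1 t2 F"
  by (simp add: bilin_t2_def)

lemma trilin_t2I:
  "(\<And>y z. klin_t2 s1 t1 t2 (\<lambda>x. F x y z)) \<Longrightarrow> (\<And>x z. klin_t2 s2 t1 t2 (\<lambda>y. F x y z)) \<Longrightarrow>
   (\<And>x y. klin_t2 s3 t1 t2 (F x y)) \<Longrightarrow> trilin_t2 s1 s2 s3 t1 t2 F"
  by (simp add: trilin_t2_def)

lemma klin_t2_tensor_left: "klin s t1 f \<Longrightarrow> klin_t2 s t1 t2 (\<lambda>x. [(f x, b)])"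
  unfolding klin_t2_def by (auto simp: klin_add klin_scale tensor_eq2_add_left tensor_eq2_refl)

lemma klin_t2_tensor_right: "klin s t2 g \<Longrightarrow> klin_t2 s t1 t2 (\<lambda>x. [(a, g x)])"
  unfolding klin_t2_def by (auto simp: klin_add klin_scale tensor_eq2_add_right tensor_eq2_scale_swap)

lemma klin_t2_comp: "klin_t2 s' t1 t2 L \<Longrightarrow> klin s s' f \<Longrightarrow> klin_t2 s t1 t2 (\<lambda>x. L (f x))"
  unfolding klin_t2_def by (auto simp: klin_add klin_scale)

lemma tensor_eq2_append_kspan:
  "tensor_eq2 t1 t2 A (B @ C) \<Longrightarrow> fsum A - fsum B - fsum C \<in> kspan (tensor2_rel t1 t2)"
  unfolding tensor_eq2_def by (simp add: fsum_append fun_diff_def algebra_simps)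

lemma tensor_eq2_scale_kspan:
  assumes "tensor_eq2 t1 t2 A (map (\<lambda>(u, v). (t1 c u, v)) B)"
  shows "fsum A - (\<lambda>p. c * fsum B p) \<in> kspan (tensor2_rel t1 t2)"
proof -
  have "(\<lambda>p. (fsum A p - fsum (map (\<lambda>(u, v). (t1 c u, v)) B) p)
             + (fsum (map (\<lambda>(u, v). (t1 c u, v)) B) p - c * fsum B p)) \<in> kspan (tensor2_rel t1 t2)"
    using assms kspan_tensor2_scale kspan_add unfolding tensor_eq2_def by blast
  then show ?thesis by (simp add: fun_diff_def)
qed

text \<open>The proof applies \<open>tensor_eq2_image_in_subspace\<close> in the module of formal sums itself,
  with \<open>N\<close> the span of the tensor relations of the target.\<close>

lemma tensor_eq2_concat_map:
  fixes F :: "'a::ab_group_add \<Rightarrow> 'b::ab_group_add \<Rightarrow> ('c::ab_group_add \<times> 'd::ab_group_add) list"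
    and t1 :: "'k::comm_ring_1 \<Rightarrow> 'c \<Rightarrow> 'c"
  assumes eq: "tensor_eq2 s1 s2 xs ys" and F: "bilin_t2 s1 s2 t1 t2 F"
  shows "tensor_eq2 t1 t2 (concat (map (\<lambda>(x, y). F x y) xs)) (concat (map (\<lambda>(x, y). F x y) ys))"
proof -
  interpret V: module "\<lambda>(c::'k) (g::'c \<times> 'd \<Rightarrow> 'k) p. c * g p" by (rule module_pointwise)
  have "(\<Sum>(x, y)\<leftarrow>xs. fsum (F x y)) - (\<Sum>(x, y)\<leftarrow>ys. fsum (F x y)) \<in> kspan (tensor2_rel t1 t2)"
    by (rule V.tensor_eq2_image_in_subspace[where f="\<lambda>(x, y). fsum (F x y)", OF subspace_kspan eq])
       (use F in \<open>auto simp: bilin_t2_def klin_t2_def intro: tensor_eq2_scale_kspan tensor_eq2_append_kspan\<close>)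
  then show ?thesis
    unfolding tensor_eq2_def by (simp add: fsum_concat case_prod_beta' fun_diff_def)
qed

lemma tensor_eq3_concat_map:
  fixes F :: "'a::ab_group_add \<Rightarrow> 'b::ab_group_add \<Rightarrow> 'e::ab_group_add \<Rightarrow> ('c::ab_group_add \<times> 'd::ab_group_add) list"
    and t1 :: "'k::comm_ring_1 \<Rightarrow> 'c \<Rightarrow> 'c"
  assumes eq: "tensor_eq3 s1 s2 s3 xs ys" and F: "trilin_t2 s1 s2 s3 t1 t2 F"
  shows "tensor_eq2 t1 t2 (concat (map (\<lambda>(x, y, z). F x y z) xs)) (concat (map (\<lambda>(x, y, z). F x y z) ys))"
proof -
  interpret V: module "\<lambda>(c::'k) (g::'c \<times> 'd \<Rightarrow> 'k) p. c * g p" by (rule module_pointwise)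
  have "(\<Sum>(x, y, z)\<leftarrow>xs. fsum (F x y z)) - (\<Sum>(x, y, z)\<leftarrow>ys. fsum (F x y z)) \<in> kspan (tensor2_rel t1 t2)"
    by (rule V.tensor_eq3_image_in_subspace[where f="\<lambda>(x, y, z). fsum (F x y z)", OF subspace_kspan eq])
       (use F in \<open>auto simp: trilin_t2_def klin_t2_def intro: tensor_eq2_scale_kspan tensor_eq2_append_kspan\<close>)
  then show ?thesis
    unfolding tensor_eq2_def by (simp add: fsum_concat case_prod_beta' fun_diff_def)
qed

lemma concat_map_singleton_pairs: "concat (map (\<lambda>(c, d). [f c d]) L) = map (\<lambda>(c, d). f c d) L"
  by (induction L) auto

lemma tensor_eq2_map_pairs:
  assumes "klin s1 t1 f" and "klin s2 t2 g" and eq: "tensor_eq2 s1 s2 xs ys"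
  shows "tensor_eq2 t1 t2 (map (\<lambda>(x, y). (f x, g y)) xs) (map (\<lambda>(x, y). (f x, g y)) ys)"
  using tensor_eq2_concat_map[OF eq bilin_t2I[of s1 t1 t2 "\<lambda>x y. [(f x, g y)]"]] assms
  by (simp add: klin_t2_tensor_left klin_t2_tensor_right concat_map_singleton_pairs)

lemma tensor_eq2_map_swap:
  assumes "klin s1 t2 f" and "klin s2 t1 g" and eq: "tensor_eq2 s1 s2 xs ys"
  shows "tensor_eq2 t1 t2 (map (\<lambda>(x, y). (g y, f x)) xs) (map (\<lambda>(x, y). (g y, f x)) ys)"
  using tensor_eq2_concat_map[OF eq bilin_t2I[of s1 t1 t2 "\<lambda>x y. [(g y, f x)]"]] assms
  by (simp add: klin_t2_tensor_left klin_t2_tensor_right concat_map_singleton_pairs)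

lemma klin_t2_concat:
  fixes t1 :: "'k::comm_ring_1 \<Rightarrow> 'c::ab_group_add \<Rightarrow> 'c"
  assumes "\<And>u v. klin_t2 s t1 t2 (\<lambda>x. F x u v)"
  shows "klin_t2 s t1 t2 (\<lambda>x. concat (map (\<lambda>(u, v). F x u v) Z))"
  unfolding klin_t2_def
proof (intro conjI allI)
  fix x y
  have "tensor_eq2 t1 t2 (concat (map (\<lambda>(u, v). F (x + y) u v) Z))
      (concat (map (\<lambda>z. (\<lambda>(u, v). F x u v) z @ (\<lambda>(u, v). F y u v) z) Z))"
    using assms unfolding klin_t2_def by (intro tensor_eq2_concat) (auto split: prod.splits)
  moreover have "fsum (concat (map (\<lambda>z. (\<lambda>(u, v). F x u v) z @ (\<lambda>(u, v). F y u v) z) Z)) =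
      (fsum (concat (map (\<lambda>(u, v). F x u v) Z) @ concat (map (\<lambda>(u, v). F y u v) Z)) :: _ \<Rightarrow> 'k)"
    by (induction Z) (auto simp: fsum_append fun_eq_iff algebra_simps)
  ultimately show "tensor_eq2 t1 t2 (concat (map (\<lambda>(u, v). F (x + y) u v) Z))
      (concat (map (\<lambda>(u, v). F x u v) Z) @ concat (map (\<lambda>(u, v). F y u v) Z))"
    by (rule tensor_eq2_fsum_cong[rotated])
next
  fix c x
  have "tensor_eq2 t1 t2 (concat (map (\<lambda>(u, v). F (s c x) u v) Z))
      (concat (map (\<lambda>z. map (\<lambda>(u, v). (t1 c u, v)) ((\<lambda>(u, v). F x u v) z)) Z))"
    using assms unfolding klin_t2_def by (intro tensor_eq2_concat) (auto split: prod.splits)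
  then show "tensor_eq2 t1 t2 (concat (map (\<lambda>(u, v). F (s c x) u v) Z))
      (map (\<lambda>(u, v). (t1 c u, v)) (concat (map (\<lambda>(u, v). F x u v) Z)))"
    by (simp add: map_concat comp_def)
qed

lemma klin_t2_concat_map:
  assumes D: "klin_t2 s s1 s2 D" and F: "bilin_t2 s1 s2 t1 t2 F"
  shows "klin_t2 s t1 t2 (\<lambda>x. concat (map (\<lambda>(u, v). F u v) (D x)))"
  unfolding klin_t2_def
proof (intro conjI allI)
  fix x y
  have "tensor_eq2 t1 t2 (concat (map (\<lambda>(u, v). F u v) (D (x + y)))) (concat (map (\<lambda>(u, v). F u v) (D x @ D y)))"
    using D unfolding klin_t2_def by (intro tensor_eq2_concat_map[OF _ F]) auto
  then show "tensor_eq2 t1 t2 (concat (map (\<lambda>(u, v). F u v) (D (x + y))))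
      (concat (map (\<lambda>(u, v). F u v) (D x)) @ concat (map (\<lambda>(u, v). F u v) (D y)))"
    by simp
next
  fix c x
  have "tensor_eq2 t1 t2 (concat (map (\<lambda>(u, v). F u v) (D (s c x))))
      (concat (map (\<lambda>(u, v). F u v) (map (\<lambda>(u, v). (s1 c u, v)) (D x))))"
    using D unfolding klin_t2_def by (intro tensor_eq2_concat_map[OF _ F]) auto
  also have "concat (map (\<lambda>(u, v). F u v) (map (\<lambda>(u, v). (s1 c u, v)) (D x))) =
      concat (map (\<lambda>(u, v). F (s1 c u) v) (D x))"
    by (simp add: comp_def case_prod_beta')
  also have "tensor_eq2 t1 t2 \<dots> (concat (map (\<lambda>z. map (\<lambda>(u, v). (t1 c u, v)) ((\<lambda>(u, v). F u v) z)) (D x)))"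
    using F unfolding bilin_t2_def klin_t2_def by (intro tensor_eq2_concat) (auto split: prod.splits)
  finally show "tensor_eq2 t1 t2 (concat (map (\<lambda>(u, v). F u v) (D (s c x))))
      (map (\<lambda>(u, v). (t1 c u, v)) (concat (map (\<lambda>(u, v). F u v) (D x))))"
    by (simp add: map_concat comp_def)
qed

lemma klin_t2_map_swap:
  assumes "klin_t2 s s1 s2 L" and "klin s1 t2 f" and "klin s2 t1 g"
  shows "klin_t2 s t1 t2 (\<lambda>x. map (\<lambda>(u, v). (g v, f u)) (L x))"
  using klin_t2_concat_map[OF assms(1) bilin_t2I[of s1 t1 t2 "\<lambda>u v. [(g v, f u)]"]] assms(2,3)
  by (simp add: klin_t2_tensor_left klin_t2_tensor_right concat_map_singleton_pairs)

lemma klin_t2_zero: "klin_t2 s t1 t2 L \<Longrightarrow> tensor_eq2 t1 t2 (L 0) []"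
proof -
  assume "klin_t2 s t1 t2 L"
  then have "(\<lambda>p. fsum (L 0) p - fsum (L 0 @ L 0) p) \<in> kspan (tensor2_rel t1 t2)"
    unfolding klin_t2_def tensor_eq2_def by (metis add_0)
  from kspan_smult[OF this, of "-1"] show ?thesis
    unfolding tensor_eq2_def by (simp add: fsum_append)
qed

lemma klin_t2_sum_list:
  assumes L: "klin_t2 s t1 t2 L"
  shows "tensor_eq2 t1 t2 (concat (map (\<lambda>(u, v). L (f u v)) Z)) (L (\<Sum>(u, v)\<leftarrow>Z. f u v))"
proof (induction Z)
  case Nil
  then show ?case using tensor_eq2_sym[OF klin_t2_zero[OF L]] by simp
next
  case (Cons a Z)
  obtain u v where a: "a = (u, v)" by force
  have "tensor_eq2 t1 t2 (L (f u v) @ concat (map (\<lambda>(u, v). L (f u v)) Z)) (L (f u v) @ L (\<Sum>(u, v)\<leftarrow>Z. f u v))"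
    by (rule tensor_eq2_append[OF tensor_eq2_refl Cons.IH])
  also have "tensor_eq2 t1 t2 \<dots> (L (f u v + (\<Sum>(u, v)\<leftarrow>Z. f u v)))"
    using L unfolding klin_t2_def by (blast intro: tensor_eq2_sym)
  finally show ?case by (simp add: a)
qed

lemma klin_t2_scale: "klin_t2 s t1 t2 L \<Longrightarrow> tensor_eq2 t1 t2 (map (\<lambda>(u, v). (t1 c u, v)) (L x)) (L (s c x))"
  unfolding klin_t2_def by (blast intro: tensor_eq2_sym)

subsection \<open>Monoidal Hom-coalgebras and Hom-Hopf algebras\<close>

text \<open>Apply \<open>\<epsilon> \<otimes> \<epsilon> \<otimes> id\<close> to both sides of coassociativity: since both counit laws are
  normalised to \<open>\<gamma>\<^sup>-\<^sup>1\<close>, the left side becomes \<open>\<gamma>\<^sup>-\<^sup>2 c\<close> and the right side \<open>c\<close>.\<close>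

lemma hom_coalgebra_involutive:
  assumes "hom_coalgebra s D e \<gamma>"
  shows "\<gamma> (\<gamma> c) = c"
proof -
  have s: "module s" and e: "klin s (*) e" and \<gamma>: "klin s s \<gamma>" "bij \<gamma>"
    and e_\<gamma>: "\<And>c. e (\<gamma> c) = e c"
    and coassoc: "tensor_eq3 s s s
           (concat (map (\<lambda>(x, y). map (\<lambda>(u, v). (inv \<gamma> x, u, v)) (D y)) (D c)))
           (concat (map (\<lambda>(x, y). map (\<lambda>(u, v). (u, v, \<gamma> y)) (D x)) (D c)))"
    and counit: "\<And>c. (\<Sum>(x, y)\<leftarrow>D c. s (e x) y) = inv \<gamma> c"
    using assms by (auto simp: hom_coalgebra_def)
  have inv_\<gamma>: "klin s s (inv \<gamma>)" by (rule klin_inv[OF \<gamma>(2,1)])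
  have e_inv: "e (inv \<gamma> x) = e x" for x by (metis \<gamma>(2) bij_inv_eq_iff e_\<gamma>)
  define g where "g x u v = s (e x) (s (e u) v)" for x u v
  have "trilin s s s s g"
    unfolding g_def by (intro trilinI klin_scale_left[OF s e] klin_scale_right[OF s] klin_id)
  from tensor_eq3_sum_trilin[OF s this coassoc]
  have "(\<Sum>(x, y)\<leftarrow>D c. \<Sum>(u, v)\<leftarrow>D y. g (inv \<gamma> x) u v) = (\<Sum>(x, y)\<leftarrow>D c. \<Sum>(u, v)\<leftarrow>D x. g u v (\<gamma> y))"
    by (simp del: map_map add: sum_list_concat_triples sum_list_map_triples sum_list_map_Pair)
  moreover have "(\<Sum>(x, y)\<leftarrow>D c. \<Sum>(u, v)\<leftarrow>D y. g (inv \<gamma> x) u v) = inv \<gamma> (inv \<gamma> c)"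
    by (simp add: g_def sum_list_scale_right[OF s] counit e_inv klin_scale[OF inv_\<gamma>, symmetric]
        sum_list_klin[OF inv_\<gamma>])
  moreover have "(\<Sum>(x, y)\<leftarrow>D c. \<Sum>(u, v)\<leftarrow>D x. g u v (\<gamma> y)) = c"
  proof -
    have counit_counit: "(\<Sum>(u, v)\<leftarrow>D x. e u * e v) = e x" for x
    proof -
      have "(\<Sum>(u, v)\<leftarrow>D x. e u * e v) = e (\<Sum>(u, v)\<leftarrow>D x. s (e u) v)"
        by (simp add: sum_list_klin[OF e, symmetric] klin_scale[OF e])
      then show ?thesis by (simp add: counit e_inv)
    qed
    show ?thesis
      by (simp add: g_def module.scale_scale[OF s] sum_list_scale_left[OF s] counit_counit
          klin_scale[OF \<gamma>(1), symmetric] sum_list_klin[OF \<gamma>(1)] counit)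
         (meson \<gamma>(2) bij_inv_eq_iff)
  qed
  ultimately show ?thesis by (metis \<gamma>(2) bij_inv_eq_iff)
qed

locale monoidal_hom_hopf =
  fixes sH :: "'k::comm_ring_1 \<Rightarrow> 'h::ab_group_add \<Rightarrow> 'h"
    and mH :: "'h \<Rightarrow> 'h \<Rightarrow> 'h" and oneH :: 'h
    and D :: "'h \<Rightarrow> ('h \<times> 'h) list" and e :: "'h \<Rightarrow> 'k"
    and S :: "'h \<Rightarrow> 'h" and \<alpha> :: "'h \<Rightarrow> 'h"
  assumes hom_hopf: "hom_hopf sH mH oneH D e S \<alpha>"
begin

lemma module_H: "module sH"
  using hom_hopf by (simp add: hom_hopf_def hom_algebra_def)

lemma klin_\<alpha>: "klin sH sH \<alpha>"
  using hom_hopf by (simp add: hom_hopf_def hom_algebra_def)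

lemma bilin_mult: "bilin sH sH sH mH"
  using hom_hopf by (simp add: hom_hopf_def hom_algebra_def)

lemma \<alpha>_mult: "\<alpha> (mH a b) = mH (\<alpha> a) (\<alpha> b)"
  using hom_hopf by (simp add: hom_hopf_def hom_algebra_def)

lemma \<alpha>_one: "\<alpha> oneH = oneH"
  using hom_hopf by (simp add: hom_hopf_def hom_algebra_def)

lemma mult_hom_assoc: "mH (\<alpha> a) (mH b c) = mH (mH a b) (\<alpha> c)"
  using hom_hopf by (simp add: hom_hopf_def hom_algebra_def)

lemma mult_one_right: "mH a oneH = \<alpha> a"
  using hom_hopf by (simp add: hom_hopf_def hom_algebra_def)

lemma mult_one_left: "mH oneH a = \<alpha> a"
  using hom_hopf by (simp add: hom_hopf_def hom_algebra_def)

lemma klin_t2_D: "klin_t2 sH sH sH D"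
  using hom_hopf by (simp add: hom_hopf_def hom_coalgebra_def)

lemma klin_counit: "klin sH (*) e"
  using hom_hopf by (simp add: hom_hopf_def hom_coalgebra_def)

lemma D_\<alpha>: "tensor_eq2 sH sH (D (\<alpha> c)) (map (\<lambda>(x, y). (\<alpha> x, \<alpha> y)) (D c))"
  using hom_hopf by (simp add: hom_hopf_def hom_coalgebra_def)

lemma counit_\<alpha>: "e (\<alpha> c) = e c"
  using hom_hopf by (simp add: hom_hopf_def hom_coalgebra_def)

lemma D_mult:
  "tensor_eq2 sH sH (D (mH g h)) (concat (map (\<lambda>(x, y). map (\<lambda>(x', y'). (mH x x', mH y y')) (D h)) (D g)))"
  using hom_hopf by (simp add: hom_hopf_def)

lemma D_one: "tensor_eq2 sH sH (D oneH) [(oneH, oneH)]"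
  using hom_hopf by (simp add: hom_hopf_def)

lemma counit_mult: "e (mH g h) = e g * e h"
  using hom_hopf by (simp add: hom_hopf_def)

lemma counit_one: "e oneH = 1"
  using hom_hopf by (simp add: hom_hopf_def)

lemma klin_S: "klin sH sH S"
  using hom_hopf by (simp add: hom_hopf_def)

lemma antipode_left: "(\<Sum>(x, y)\<leftarrow>D h. mH (S x) y) = sH (e h) oneH"
  using hom_hopf by (simp add: hom_hopf_def)

lemma antipode_right: "(\<Sum>(x, y)\<leftarrow>D h. mH x (S y)) = sH (e h) oneH"
  using hom_hopf by (simp add: hom_hopf_def)

lemma S_\<alpha>: "S (\<alpha> h) = \<alpha> (S h)"
  using hom_hopf by (simp add: hom_hopf_def)

lemma \<alpha>_\<alpha> [simp]: "\<alpha> (\<alpha> c) = c"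
  using hom_hopf hom_coalgebra_involutive by (auto simp: hom_hopf_def)

lemma inv_\<alpha>: "inv \<alpha> = \<alpha>"
  by (rule inv_equality) simp_all

lemma coassoc:
  "tensor_eq3 sH sH sH (concat (map (\<lambda>(x, y). map (\<lambda>(u, v). (\<alpha> x, u, v)) (D y)) (D c)))
                       (concat (map (\<lambda>(x, y). map (\<lambda>(u, v). (u, v, \<alpha> y)) (D x)) (D c)))"
  using hom_hopf by (simp add: hom_hopf_def hom_coalgebra_def inv_\<alpha>)

lemma counit_left: "(\<Sum>(x, y)\<leftarrow>D c. sH (e x) y) = \<alpha> c"
  using hom_hopf by (simp add: hom_hopf_def hom_coalgebra_def inv_\<alpha>)

lemma counit_right: "(\<Sum>(x, y)\<leftarrow>D c. sH (e y) x) = \<alpha> c"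
  using hom_hopf by (simp add: hom_hopf_def hom_coalgebra_def inv_\<alpha>)

lemma coassoc_sum:
  assumes "module t" and "trilin sH sH sH t g"
  shows "(\<Sum>(x, y)\<leftarrow>D c. \<Sum>(u, v)\<leftarrow>D y. g (\<alpha> x) u v) = (\<Sum>(x, y)\<leftarrow>D c. \<Sum>(u, v)\<leftarrow>D x. g u v (\<alpha> y))"
  using tensor_eq3_sum_trilin[OF assms coassoc[of c]]
  by (simp del: map_map add: sum_list_concat_triples sum_list_map_triples sum_list_map_Pair)

lemma concat_concat: "concat (concat xss) = concat (map concat xss)"
  by (induction xss) auto

lemma coassoc_concat:
  assumes "trilin_t2 sH sH sH t1 t2 F"
  shows "tensor_eq2 t1 t2 (concat (map (\<lambda>(x, y). concat (map (\<lambda>(u, v). F (\<alpha> x) u v) (D y))) (D c)))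
                          (concat (map (\<lambda>(x, y). concat (map (\<lambda>(u, v). F u v (\<alpha> y)) (D x))) (D c)))"
  using tensor_eq3_concat_map[OF coassoc[of c] assms]
  by (simp add: map_concat comp_def case_prod_beta' concat_concat)

lemma counit_left_klin:
  assumes "klin sH t f"
  shows "(\<Sum>(x, y)\<leftarrow>D b. t (e x) (f (\<alpha> y))) = f b"
proof -
  have lin: "klin sH t (\<lambda>x. f (\<alpha> x))" by (rule klin_comp[OF assms klin_\<alpha>])
  have "(\<Sum>(x, y)\<leftarrow>D b. t (e x) (f (\<alpha> y))) = (\<Sum>(x, y)\<leftarrow>D b. f (\<alpha> (sH (e x) y)))"
    using klin_scale[OF lin] by simp
  then have "(\<Sum>(x, y)\<leftarrow>D b. t (e x) (f (\<alpha> y))) = f (\<alpha> (\<Sum>(x, y)\<leftarrow>D b. sH (e x) y))"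
    by (simp add: sum_list_klin[OF lin])
  then show ?thesis by (simp add: counit_left)
qed

lemma counit_right_klin:
  assumes "klin sH t f"
  shows "(\<Sum>(x, y)\<leftarrow>D b. t (e y) (f (\<alpha> x))) = f b"
proof -
  have lin: "klin sH t (\<lambda>x. f (\<alpha> x))" by (rule klin_comp[OF assms klin_\<alpha>])
  have "(\<Sum>(x, y)\<leftarrow>D b. t (e y) (f (\<alpha> x))) = (\<Sum>(x, y)\<leftarrow>D b. f (\<alpha> (sH (e y) x)))"
    using klin_scale[OF lin] by simp
  then have "(\<Sum>(x, y)\<leftarrow>D b. t (e y) (f (\<alpha> x))) = f (\<alpha> (\<Sum>(x, y)\<leftarrow>D b. sH (e y) x))"
    by (simp add: sum_list_klin[OF lin])
  then show ?thesis by (simp add: counit_right)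
qed

text \<open>Since \<open>\<alpha>\<close> is an involution, untwisting the product to \<open>umult a b = \<alpha> (mH a b)\<close> gives
  an ordinary associative unital algebra, for which \<open>D\<close> is multiplicative and \<open>S\<close> is an
  antipode; the classical Hopf-algebra identities for \<open>S\<close> are proved there.\<close>

definition umult :: "'h \<Rightarrow> 'h \<Rightarrow> 'h" where
  "umult a b = \<alpha> (mH a b)"

lemma umult_eq: "umult a b = mH (\<alpha> a) (\<alpha> b)"
  by (simp add: umult_def \<alpha>_mult)

lemma mult_eq_umult: "mH a b = umult (\<alpha> a) (\<alpha> b)"
  by (simp add: umult_eq)

lemma mult_eq_\<alpha>_umult: "mH a b = \<alpha> (umult a b)"
  by (simp add: umult_def)

lemma \<alpha>_umult: "\<alpha> (umult a b) = umult (\<alpha> a) (\<alpha> b)"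
  by (simp add: umult_def \<alpha>_mult)

lemma umult_assoc [simp]: "umult (umult a b) c = umult a (umult b c)"
  by (simp add: umult_eq \<alpha>_mult mult_hom_assoc)

lemma umult_one_right [simp]: "umult a oneH = a"
  by (simp add: umult_def mult_one_right)

lemma umult_one_left [simp]: "umult oneH a = a"
  by (simp add: umult_def mult_one_left)

lemma bilin_umult: "bilin sH sH sH umult"
  unfolding umult_def bilin_def
  using bilin_mult klin_\<alpha> by (auto intro: klin_comp simp: bilin_def)

lemma klin_S_comp: "klin s sH f \<Longrightarrow> klin s sH (\<lambda>x. S (f x))"
  by (rule klin_comp[OF klin_S])

lemma klin_\<alpha>_comp: "klin s sH f \<Longrightarrow> klin s sH (\<lambda>x. \<alpha> (f x))"
  by (rule klin_comp[OF klin_\<alpha>])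

lemmas klin_H_intros =
  klin_S_comp klin_\<alpha>_comp klin_id klin_sum_list[OF module_H] klin_scale_right[OF module_H]
  klin_bilin_left[OF bilin_umult] klin_bilin_right[OF bilin_umult]
  klin_bilin_left[OF bilin_mult] klin_bilin_right[OF bilin_mult]

lemma counit_umult: "e (umult a b) = e a * e b"
  by (simp add: umult_eq counit_mult counit_\<alpha>)

lemma antipode_umult_left: "(\<Sum>(x, y)\<leftarrow>D h. umult (S x) y) = sH (e h) oneH"
  by (simp add: umult_def sum_list_klin[OF klin_\<alpha>] antipode_left klin_scale[OF klin_\<alpha>] \<alpha>_one)

lemma antipode_umult_right: "(\<Sum>(x, y)\<leftarrow>D h. umult x (S y)) = sH (e h) oneH"
  by (simp add: umult_def sum_list_klin[OF klin_\<alpha>] antipode_right klin_scale[OF klin_\<alpha>] \<alpha>_one)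

lemma S_one: "S oneH = oneH"
proof -
  have "bilin sH sH sH (\<lambda>x y. mH (S x) y)"
    by (intro bilinI klin_H_intros)
  from tensor_eq2_sum_bilin[OF module_H this D_one] have "\<alpha> (S oneH) = oneH"
    using antipode_left[of oneH] by (simp add: counit_one mult_one_right module.scale_one[OF module_H])
  then show ?thesis by (metis \<alpha>_\<alpha> \<alpha>_one)
qed

lemma D_umult:
  "tensor_eq2 sH sH (D (umult g h)) (concat (map (\<lambda>(x, y). map (\<lambda>(x', y'). (umult x x', umult y y')) (D h)) (D g)))"
proof -
  have "tensor_eq2 sH sH (D (umult g h)) (map (\<lambda>(x, y). (\<alpha> x, \<alpha> y)) (D (mH g h)))"
    unfolding umult_def by (rule D_\<alpha>)
  also have "tensor_eq2 sH sH \<dots> (map (\<lambda>(x, y). (\<alpha> x, \<alpha> y))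
      (concat (map (\<lambda>(x, y). map (\<lambda>(x', y'). (mH x x', mH y y')) (D h)) (D g))))"
    by (rule tensor_eq2_map_pairs[OF klin_\<alpha> klin_\<alpha> D_mult])
  finally show ?thesis
    by (simp add: map_concat comp_def case_prod_beta' umult_def)
qed

lemma sum_coprod_umult:
  assumes "module t" and "bilin sH sH t F"
  shows "(\<Sum>(x, y)\<leftarrow>D (umult a b). F x y) = (\<Sum>(x, y)\<leftarrow>D a. \<Sum>(x', y')\<leftarrow>D b. F (umult x x') (umult y y'))"
  using tensor_eq2_sum_bilin[OF assms D_umult]
  by (simp del: map_map add: sum_list_concat_pairs sum_list_map_pairs)

lemma antipode_cancel_left:
  assumes "module t" and F: "bilin sH sH t F"
  shows "(\<Sum>(p, q)\<leftarrow>D c. \<Sum>(u, v)\<leftarrow>D q. F (umult (S (\<alpha> p)) u) v) = F oneH c"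
proof -
  have "trilin sH sH sH t (\<lambda>p u v. F (umult (S p) u) v)"
    by (intro trilinI klin_comp[OF bilin_klin_left[OF F]] klin_H_intros bilin_klin_right[OF F])
  from coassoc_sum[OF assms(1) this, of c]
  have "(\<Sum>(p, q)\<leftarrow>D c. \<Sum>(u, v)\<leftarrow>D q. F (umult (S (\<alpha> p)) u) v)
      = (\<Sum>(x, y)\<leftarrow>D c. F (\<Sum>(u, v)\<leftarrow>D x. umult (S u) v) (\<alpha> y))"
    by (simp add: sum_list_bilin_left[OF F])
  also have "\<dots> = (\<Sum>(x, y)\<leftarrow>D c. t (e x) (F oneH (\<alpha> y)))"
    by (simp add: antipode_umult_left bilin_scale_left[OF F])
  also have "\<dots> = F oneH c"
    by (rule counit_left_klin[OF bilin_klin_right[OF F]])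
  finally show ?thesis .
qed

lemma S_umult: "S (umult a b) = umult (S b) (S a)"
proof -
  define G where "G a1 x y b1 b2 =
      (\<Sum>(x', y')\<leftarrow>D b2. umult (S (\<alpha> b1)) (umult (S (\<alpha> a1)) (umult x (umult x' (S (umult y y'))))))"
    for a1 x y b1 b2
  define E where "E = (\<Sum>(a1, a2)\<leftarrow>D a. \<Sum>(x, y)\<leftarrow>D a2. \<Sum>(b1, b2)\<leftarrow>D b. G a1 x y b1 b2)"
  define F where "F p y = (\<Sum>(b1, b2)\<leftarrow>D b. \<Sum>(x', y')\<leftarrow>D b2.
      umult (S (\<alpha> b1)) (umult p (umult x' (S (umult y y')))))" for p y
  define F' where "F' p y' = umult p (S (umult a y'))" for p y'
  have "bilin sH sH sH F" "bilin sH sH sH F'"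
    unfolding F_def F'_def by (intro bilinI klin_H_intros)+
  have "E = (\<Sum>(a1, a2)\<leftarrow>D a. \<Sum>(x, y)\<leftarrow>D a2. F (umult (S (\<alpha> a1)) x) y)"
    by (simp add: E_def G_def F_def)
  also have "\<dots> = F oneH a"
    by (rule antipode_cancel_left[OF module_H \<open>bilin sH sH sH F\<close>])
  also have "\<dots> = (\<Sum>(b1, b2)\<leftarrow>D b. \<Sum>(x', y')\<leftarrow>D b2. F' (umult (S (\<alpha> b1)) x') y')"
    by (simp add: F_def F'_def)
  also have "\<dots> = F' oneH b"
    by (rule antipode_cancel_left[OF module_H \<open>bilin sH sH sH F'\<close>])
  finally have "E = S (umult a b)"
    by (simp add: F'_def)
  have inner: "(\<Sum>(c1, c2)\<leftarrow>D (umult a2 b2). umult c1 (S c2)) =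
      (\<Sum>(x, y)\<leftarrow>D a2. \<Sum>(x', y')\<leftarrow>D b2. umult (umult x x') (S (umult y y')))" for a2 b2
    by (rule sum_coprod_umult[OF module_H]) (intro bilinI klin_H_intros)
  have "E = (\<Sum>(a1, a2)\<leftarrow>D a. \<Sum>(b1, b2)\<leftarrow>D b. \<Sum>(x, y)\<leftarrow>D a2. G a1 x y b1 b2)"
    unfolding E_def by (simp only: sum_list_swap[where ys = "D b"])
  also have "\<dots> = (\<Sum>(a1, a2)\<leftarrow>D a. \<Sum>(b1, b2)\<leftarrow>D b.
      umult (umult (S (\<alpha> b1)) (S (\<alpha> a1))) (\<Sum>(c1, c2)\<leftarrow>D (umult a2 b2). umult c1 (S c2)))"
    by (simp add: inner G_def sum_list_bilin_right[OF bilin_umult, symmetric])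
  also have "\<dots> = (\<Sum>(a1, a2)\<leftarrow>D a. \<Sum>(b1, b2)\<leftarrow>D b. sH (e a2) (sH (e b2) (umult (S (\<alpha> b1)) (S (\<alpha> a1)))))"
    by (simp add: antipode_umult_right counit_umult bilin_scale_right[OF bilin_umult]
        module.scale_scale[OF module_H])
  also have "\<dots> = (\<Sum>(a1, a2)\<leftarrow>D a. sH (e a2) (umult (S b) (S (\<alpha> a1))))"
    by (simp add: sum_list_scale_right[OF module_H] counit_right_klin[of sH "\<lambda>x. umult (S x) _"] klin_H_intros)
  also have "\<dots> = umult (S b) (S a)"
    by (simp add: counit_right_klin[of sH "\<lambda>x. umult _ (S x)"] klin_H_intros)
  finally show ?thesis using \<open>E = S (umult a b)\<close> by simp
qed

definition tmult :: "('h \<times> 'h) list \<Rightarrow> ('h \<times> 'h) list \<Rightarrow> ('h \<times> 'h) list" where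
  "tmult A B = concat (map (\<lambda>(x, y). map (\<lambda>(x', y'). (umult x x', umult y y')) B) A)"

lemma tmult_Nil_left [simp]: "tmult [] B = []"
  by (simp add: tmult_def)

lemma tmult_Nil_right [simp]: "tmult A [] = []"
  by (induction A) (auto simp: tmult_def)

lemma tmult_append_left: "tmult (A @ A') B = tmult A B @ tmult A' B"
  by (simp add: tmult_def)

lemma tmult_concat_left: "tmult (concat (map F Z)) B = concat (map (\<lambda>z. tmult (F z) B) Z)"
  by (induction Z) (auto simp: tmult_append_left)

lemma tmult_single_left: "tmult [(a, b)] B = map (\<lambda>(x, y). (umult a x, umult b y)) B"
  by (simp add: tmult_def)

lemma tmult_single_right: "tmult A [(a, b)] = map (\<lambda>(x, y). (umult x a, umult y b)) A"
  by (induction A) (auto simp: tmult_def)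

lemma tmult_assoc: "tmult (tmult A B) C = tmult A (tmult B C)"
  by (induction A) (auto simp: tmult_def map_concat comp_def case_prod_beta')

lemma tmult_scale_left: "tmult (map (\<lambda>(u, v). (sH c u, v)) A) B = map (\<lambda>(u, v). (sH c u, v)) (tmult A B)"
  by (induction A) (auto simp: tmult_def bilin_scale_left[OF bilin_umult] comp_def case_prod_beta')

lemma tmult_scale_right: "tmult A (map (\<lambda>(u, v). (sH c u, v)) B) = map (\<lambda>(u, v). (sH c u, v)) (tmult A B)"
  by (induction A) (auto simp: tmult_def bilin_scale_right[OF bilin_umult] comp_def case_prod_beta')

lemma tmult_append_right: "tensor_eq2 sH sH (tmult A (B @ B')) (tmult A B @ tmult A B')"
  by (rule tensor_eq2_if_fsum_eq) (induction A, auto simp: tmult_def fsum_append fun_eq_iff algebra_simps)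

lemma tmult_concat_right: "tensor_eq2 sH sH (tmult A (concat (map F Z))) (concat (map (\<lambda>z. tmult A (F z)) Z))"
proof (induction Z)
  case (Cons z Z)
  have "tensor_eq2 sH sH (tmult A (F z @ concat (map F Z))) (tmult A (F z) @ tmult A (concat (map F Z)))"
    by (rule tmult_append_right)
  also have "tensor_eq2 sH sH \<dots> (tmult A (F z) @ concat (map (\<lambda>z. tmult A (F z)) Z))"
    by (rule tensor_eq2_append[OF tensor_eq2_refl Cons.IH])
  finally show ?case by simp
qed (simp add: tensor_eq2_refl)

lemma tmult_cong_right: "tensor_eq2 sH sH B B' \<Longrightarrow> tensor_eq2 sH sH (tmult A B) (tmult A B')"
  unfolding tmult_def
  by (intro tensor_eq2_concat, clarify)
     (rule tensor_eq2_map_pairs[OF klin_bilin_right[OF bilin_umult klin_id] klin_bilin_right[OF bilin_umult klin_id]])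

lemma tmult_cong_left:
  assumes "tensor_eq2 sH sH A A'"
  shows "tensor_eq2 sH sH (tmult A B) (tmult A' B)"
proof -
  have "klin_t2 sH sH sH (\<lambda>x. [(umult x x', umult y y')])" "klin_t2 sH sH sH (\<lambda>y. [(umult x x', umult y y')])"
    for x y x' y'
    by (rule klin_t2_tensor_left klin_t2_tensor_right, rule klin_bilin_left[OF bilin_umult klin_id])+
  then have "bilin_t2 sH sH sH sH (\<lambda>x y. concat (map (\<lambda>(x', y'). [(umult x x', umult y y')]) B))"
    by (intro bilin_t2I klin_t2_concat)
  from tensor_eq2_concat_map[OF assms this] show ?thesis
    by (simp add: tmult_def concat_map_singleton_pairs)
qed

lemma klin_t2_tmult_left: "klin_t2 s sH sH L \<Longrightarrow> klin_t2 s sH sH (\<lambda>x. tmult (L x) B)"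
  unfolding klin_t2_def
  by (auto simp: tmult_append_left[symmetric] tmult_scale_left[symmetric] intro: tmult_cong_left)

lemma klin_t2_tmult_right: "klin_t2 s sH sH L \<Longrightarrow> klin_t2 s sH sH (\<lambda>x. tmult A (L x))"
  unfolding klin_t2_def
  by (auto simp: tmult_scale_right[symmetric] intro: tmult_cong_right tensor_eq2_trans[OF _ tmult_append_right])

definition coprod_S_flip :: "'h \<Rightarrow> ('h \<times> 'h) list" where
  "coprod_S_flip c = map (\<lambda>(x, y). (S y, S x)) (D c)"

lemma klin_t2_coprod_S_flip: "klin_t2 sH sH sH coprod_S_flip"
  unfolding coprod_S_flip_def by (rule klin_t2_map_swap[OF klin_t2_D klin_S klin_S])

lemma tmult_coprod_antipode_right:
  "tensor_eq2 sH sH (concat (map (\<lambda>(c, d). tmult (D (\<alpha> c)) [(w, S d)]) (D u))) [(umult (\<alpha> u) w, oneH)]"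
proof -
  define K where "K x y z = [(umult (\<alpha> x) w, umult (\<alpha> y) (S (\<alpha> z)))]" for x y z
  have "trilin_t2 sH sH sH sH sH K"
    unfolding K_def
    by (intro trilin_t2I klin_t2_tensor_left[OF klin_bilin_left[OF bilin_umult klin_\<alpha>]]
        klin_t2_tensor_right[OF klin_bilin_left[OF bilin_umult klin_\<alpha>]]
        klin_t2_tensor_right[OF klin_bilin_right[OF bilin_umult klin_S_comp[OF klin_\<alpha>]]])
  have "tensor_eq2 sH sH (tmult (D (\<alpha> c)) [(w, S d)]) (concat (map (\<lambda>(x, y). K x y (\<alpha> d)) (D c)))" for c d
    using tmult_cong_left[OF D_\<alpha>, of c "[(w, S d)]"]
    by (simp add: tmult_single_right K_def concat_map_singleton_pairs comp_def case_prod_beta')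
  then have "tensor_eq2 sH sH (concat (map (\<lambda>(c, d). tmult (D (\<alpha> c)) [(w, S d)]) (D u)))
      (concat (map (\<lambda>(c, d). concat (map (\<lambda>(x, y). K x y (\<alpha> d)) (D c))) (D u)))"
    by (intro tensor_eq2_concat) auto
  also have "tensor_eq2 sH sH \<dots> (concat (map (\<lambda>(c, d). concat (map (\<lambda>(x, y). K (\<alpha> c) x y) (D d))) (D u)))"
    by (rule tensor_eq2_sym[OF coassoc_concat[OF \<open>trilin_t2 sH sH sH sH sH K\<close>]])
  also have "tensor_eq2 sH sH \<dots> (concat (map (\<lambda>(c, d). [(sH (e d) (umult c w), oneH)]) (D u)))"
  proof (rule tensor_eq2_concat, clarify)
    fix c d
    have "(\<Sum>(x, y)\<leftarrow>D d. \<alpha> (umult x (S y))) = sH (e d) oneH"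
      by (simp add: sum_list_klin[OF klin_\<alpha>] antipode_umult_right klin_scale[OF klin_\<alpha>] \<alpha>_one)
    moreover have "concat (map (\<lambda>(x, y). K (\<alpha> c) x y) (D d)) =
        concat (map (\<lambda>(x, y). [(umult c w, \<alpha> (umult x (S y)))]) (D d))"
      by (simp add: K_def S_\<alpha> \<alpha>_umult)
    ultimately have "tensor_eq2 sH sH (concat (map (\<lambda>(x, y). K (\<alpha> c) x y) (D d))) [(umult c w, sH (e d) oneH)]"
      using tensor_eq2_sum_right[of sH sH "umult c w" "\<lambda>x y. \<alpha> (umult x (S y))" "D d"] by simp
    then show "tensor_eq2 sH sH (concat (map (\<lambda>(x, y). K (\<alpha> c) x y) (D d))) [(sH (e d) (umult c w), oneH)]"
      using tensor_eq2_scale_swap by (rule tensor_eq2_trans)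
  qed
  also have "tensor_eq2 sH sH \<dots> [(\<Sum>(c, d)\<leftarrow>D u. sH (e d) (umult c w), oneH)]"
    by (rule tensor_eq2_sum_left)
  also have "(\<Sum>(c, d)\<leftarrow>D u. sH (e d) (umult c w)) = umult (\<alpha> u) w"
    by (simp add: bilin_scale_left[OF bilin_umult, symmetric] sum_list_bilin_left[OF bilin_umult] counit_right)
  finally show ?thesis .
qed

lemma tmult_coprod_coprod_S_flip:
  "tensor_eq2 sH sH (concat (map (\<lambda>(u, v). tmult (D u) (coprod_S_flip v)) (D q))) [(sH (e q) oneH, oneH)]"
proof -
  define H where "H z c d = tmult (D (\<alpha> z)) [(S d, S c)]" for z c d
  have "trilin_t2 sH sH sH sH sH H"
    unfolding H_def
    by (intro trilin_t2I klin_t2_tmult_left klin_t2_tmult_right klin_t2_comp[OF klin_t2_D klin_\<alpha>]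
        klin_t2_tensor_left klin_t2_tensor_right klin_S)
  have "tensor_eq2 sH sH (tmult (D u) (coprod_S_flip v)) (concat (map (\<lambda>(c, d). H (\<alpha> u) c d) (D v)))" for u v
    using tmult_concat_right[of "D u" "\<lambda>(c, d). [(S d, S c)]" "D v"]
    by (simp add: H_def coprod_S_flip_def concat_map_singleton_pairs case_prod_beta')
  then have "tensor_eq2 sH sH (concat (map (\<lambda>(u, v). tmult (D u) (coprod_S_flip v)) (D q)))
      (concat (map (\<lambda>(u, v). concat (map (\<lambda>(c, d). H (\<alpha> u) c d) (D v))) (D q)))"
    by (intro tensor_eq2_concat) auto
  also have "tensor_eq2 sH sH \<dots> (concat (map (\<lambda>(u, v). concat (map (\<lambda>(c, d). H c d (\<alpha> v)) (D u))) (D q)))"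
    by (rule coassoc_concat[OF \<open>trilin_t2 sH sH sH sH sH H\<close>])
  also have "tensor_eq2 sH sH \<dots> (concat (map (\<lambda>(u, v). [(umult (\<alpha> u) (S (\<alpha> v)), oneH)]) (D q)))"
    using tmult_coprod_antipode_right by (intro tensor_eq2_concat) (auto simp: H_def)
  also have "tensor_eq2 sH sH \<dots> [(\<Sum>(u, v)\<leftarrow>D q. umult (\<alpha> u) (S (\<alpha> v)), oneH)]"
    by (rule tensor_eq2_sum_left)
  also have "(\<Sum>(u, v)\<leftarrow>D q. umult (\<alpha> u) (S (\<alpha> v))) = sH (e q) oneH"
    by (simp add: S_\<alpha> \<alpha>_umult[symmetric] sum_list_klin[OF klin_\<alpha>] antipode_umult_right
        klin_scale[OF klin_\<alpha>] \<alpha>_one)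
  finally show ?thesis .
qed

lemma coprod_S_tmult_coprod:
  "tensor_eq2 sH sH (concat (map (\<lambda>(u, v). tmult (D (S u)) (D v)) (D p))) [(sH (e p) oneH, oneH)]"
proof -
  have "tensor_eq2 sH sH (concat (map (\<lambda>(u, v). tmult (D (S u)) (D v)) (D p)))
      (concat (map (\<lambda>(u, v). D (umult (S u) v)) (D p)))"
    by (rule tensor_eq2_concat) (auto intro: tensor_eq2_sym[OF D_umult] simp: tmult_def)
  also have "tensor_eq2 sH sH \<dots> (D (\<Sum>(u, v)\<leftarrow>D p. umult (S u) v))"
    by (rule klin_t2_sum_list[OF klin_t2_D])
  also have "tensor_eq2 sH sH \<dots> (map (\<lambda>(u, v). (sH (e p) u, v)) (D oneH))"
    using klin_t2_D by (simp add: antipode_umult_left klin_t2_def)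
  also have "tensor_eq2 sH sH \<dots> (map (\<lambda>(u, v). (sH (e p) u, v)) [(oneH, oneH)])"
    by (rule tensor_eq2_map_pairs[OF klin_scale_right[OF module_H klin_id] klin_id D_one])
  finally show ?thesis by simp
qed

text \<open>Both \<open>D \<circ> S\<close> and \<open>coprod_S_flip\<close> are convolution inverses of \<open>D\<close>. The two
  bracketings of the convolution product \<open>(D \<circ> S) * D * coprod_S_flip\<close>, which agree by
  coassociativity, evaluate to \<open>D \<circ> S\<close> and to \<open>coprod_S_flip\<close>.\<close>

definition triple_conv :: "'h \<Rightarrow> 'h \<Rightarrow> 'h \<Rightarrow> ('h \<times> 'h) list" where
  "triple_conv x u v = tmult (tmult (D (S x)) (D u)) (coprod_S_flip v)"

lemma trilin_t2_triple_conv: "trilin_t2 sH sH sH sH sH triple_conv"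
  unfolding triple_conv_def
  by (intro trilin_t2I klin_t2_tmult_left klin_t2_tmult_right klin_t2_comp[OF klin_t2_D klin_S]
      klin_t2_coprod_S_flip klin_t2_D)

lemma triple_conv_bracket_right:
  "tensor_eq2 sH sH (concat (map (\<lambda>(p, q). concat (map (\<lambda>(u, v). triple_conv (\<alpha> p) u v) (D q))) (D a))) (D (S a))"
proof -
  have "tensor_eq2 sH sH (concat (map (\<lambda>(u, v). triple_conv (\<alpha> p) u v) (D q))) (D (sH (e q) (S (\<alpha> p))))" for p q
  proof -
    have "tensor_eq2 sH sH (concat (map (\<lambda>(u, v). triple_conv (\<alpha> p) u v) (D q)))
        (tmult (D (S (\<alpha> p))) (concat (map (\<lambda>(u, v). tmult (D u) (coprod_S_flip v)) (D q))))"
      using tensor_eq2_sym[OF tmult_concat_right[of "D (S (\<alpha> p))" "\<lambda>(u, v). tmult (D u) (coprod_S_flip v)" "D q"]]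
      by (simp add: triple_conv_def tmult_assoc case_prod_beta')
    also have "tensor_eq2 sH sH \<dots> (tmult (D (S (\<alpha> p))) [(sH (e q) oneH, oneH)])"
      by (rule tmult_cong_right[OF tmult_coprod_coprod_S_flip])
    also have "tensor_eq2 sH sH \<dots> (D (sH (e q) (S (\<alpha> p))))"
      using klin_t2_scale[OF klin_t2_D]
      by (simp add: tmult_single_right bilin_scale_right[OF bilin_umult] case_prod_beta')
    finally show ?thesis .
  qed
  then have "tensor_eq2 sH sH (concat (map (\<lambda>(p, q). concat (map (\<lambda>(u, v). triple_conv (\<alpha> p) u v) (D q))) (D a)))
      (concat (map (\<lambda>(p, q). D (sH (e q) (S (\<alpha> p)))) (D a)))"
    by (intro tensor_eq2_concat) auto
  also have "tensor_eq2 sH sH \<dots> (D (S a))"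
    using klin_t2_sum_list[OF klin_t2_D, of "\<lambda>p q. sH (e q) (S (\<alpha> p))" "D a"]
    by (simp add: counit_right_klin[OF klin_S])
  finally show ?thesis .
qed

lemma triple_conv_bracket_left:
  "tensor_eq2 sH sH (concat (map (\<lambda>(p, q). concat (map (\<lambda>(u, v). triple_conv u v (\<alpha> q)) (D p))) (D a))) (coprod_S_flip a)"
proof -
  have "tensor_eq2 sH sH (concat (map (\<lambda>(u, v). triple_conv u v (\<alpha> q)) (D p))) (coprod_S_flip (sH (e p) (\<alpha> q)))" for p q
  proof -
    have "tensor_eq2 sH sH (concat (map (\<lambda>(u, v). triple_conv u v (\<alpha> q)) (D p)))
        (tmult (concat (map (\<lambda>(u, v). tmult (D (S u)) (D v)) (D p))) (coprod_S_flip (\<alpha> q)))"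
      by (simp add: triple_conv_def tmult_concat_left case_prod_beta' tensor_eq2_refl)
    also have "tensor_eq2 sH sH \<dots> (tmult [(sH (e p) oneH, oneH)] (coprod_S_flip (\<alpha> q)))"
      by (rule tmult_cong_left[OF coprod_S_tmult_coprod])
    also have "tensor_eq2 sH sH \<dots> (coprod_S_flip (sH (e p) (\<alpha> q)))"
      using klin_t2_scale[OF klin_t2_coprod_S_flip]
      by (simp add: tmult_single_left bilin_scale_left[OF bilin_umult] case_prod_beta')
    finally show ?thesis .
  qed
  then have "tensor_eq2 sH sH (concat (map (\<lambda>(p, q). concat (map (\<lambda>(u, v). triple_conv u v (\<alpha> q)) (D p))) (D a)))
      (concat (map (\<lambda>(p, q). coprod_S_flip (sH (e p) (\<alpha> q))) (D a)))"
    by (intro tensor_eq2_concat) auto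
  also have "tensor_eq2 sH sH \<dots> (coprod_S_flip a)"
    using klin_t2_sum_list[OF klin_t2_coprod_S_flip, of "\<lambda>p q. sH (e p) (\<alpha> q)" "D a"]
    by (simp add: counit_left_klin[OF klin_id])
  finally show ?thesis .
qed

lemma coprod_S: "tensor_eq2 sH sH (D (S a)) (coprod_S_flip a)"
  using tensor_eq2_trans[OF tensor_eq2_sym[OF triple_conv_bracket_right]
      tensor_eq2_trans[OF coassoc_concat[OF trilin_t2_triple_conv] triple_conv_bracket_left]] .

end

locale monoidal_hom_hopf_bij_antipode = monoidal_hom_hopf +
  assumes bij_S: "bij S"
begin

definition Sinv where
  "Sinv = inv S"

lemma S_Sinv [simp]: "S (Sinv x) = x"
  unfolding Sinv_def by (meson bij_S bij_inv_eq_iff)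

lemma Sinv_S [simp]: "Sinv (S x) = x"
  unfolding Sinv_def using bij_S by (simp add: bij_is_inj)

lemma klin_Sinv: "klin sH sH Sinv"
  unfolding Sinv_def by (rule klin_inv[OF bij_S klin_S])

lemma Sinv_umult: "Sinv (umult a b) = umult (Sinv b) (Sinv a)"
  by (metis S_umult S_Sinv Sinv_S)

lemma Sinv_\<alpha>: "Sinv (\<alpha> x) = \<alpha> (Sinv x)"
  by (metis S_Sinv Sinv_S S_\<alpha>)

lemma Sinv_one: "Sinv oneH = oneH"
  by (metis S_one Sinv_S)

lemma antipode_Sinv_left: "(\<Sum>(x, y)\<leftarrow>D h. umult y (Sinv x)) = sH (e h) oneH"
proof -
  have "(\<Sum>(x, y)\<leftarrow>D h. umult y (Sinv x)) = Sinv (\<Sum>(x, y)\<leftarrow>D h. umult x (S y))"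
    by (simp add: sum_list_klin[OF klin_Sinv, symmetric] Sinv_umult)
  then show ?thesis by (simp add: antipode_umult_right klin_scale[OF klin_Sinv] Sinv_one)
qed

lemma antipode_Sinv_right: "(\<Sum>(x, y)\<leftarrow>D h. umult (Sinv y) x) = sH (e h) oneH"
proof -
  have "(\<Sum>(x, y)\<leftarrow>D h. umult (Sinv y) x) = Sinv (\<Sum>(x, y)\<leftarrow>D h. umult (S x) y)"
    by (simp add: sum_list_klin[OF klin_Sinv, symmetric] Sinv_umult)
  then show ?thesis by (simp add: antipode_umult_left klin_scale[OF klin_Sinv] Sinv_one)
qed

lemma coprod_Sinv: "tensor_eq2 sH sH (D (Sinv y)) (map (\<lambda>(c, d). (Sinv d, Sinv c)) (D y))"
proof -
  have "tensor_eq2 sH sH (map (\<lambda>(c, d). (Sinv d, Sinv c)) (D y))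
      (map (\<lambda>(c, d). (Sinv d, Sinv c)) (coprod_S_flip (Sinv y)))"
    using tensor_eq2_map_swap[OF klin_Sinv klin_Sinv coprod_S[of "Sinv y"]] by simp
  then show ?thesis
    by (simp add: coprod_S_flip_def comp_def case_prod_beta' tensor_eq2_sym)
qed

end

subsection \<open>The integral attached to a central total integral\<close>

locale central_total_integral = monoidal_hom_hopf_bij_antipode sH mH oneH D e S \<alpha>
  for sH :: "'k::comm_ring_1 \<Rightarrow> 'h::ab_group_add \<Rightarrow> 'h"
    and mH :: "'h \<Rightarrow> 'h \<Rightarrow> 'h" and oneH :: 'h
    and D :: "'h \<Rightarrow> ('h \<times> 'h) list" and e :: "'h \<Rightarrow> 'k"
    and S :: "'h \<Rightarrow> 'h" and \<alpha> :: "'h \<Rightarrow> 'h" +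
  fixes sA :: "'k \<Rightarrow> 'a::ab_group_add \<Rightarrow> 'a"
    and mA :: "'a \<Rightarrow> 'a \<Rightarrow> 'a" and oneA :: 'a
    and \<rho> :: "'a \<Rightarrow> ('a \<times> 'h) list" and \<beta> :: "'a \<Rightarrow> 'a"
    and \<phi> :: "'h \<Rightarrow> 'a"
  assumes comodule_algebra: "hom_comodule_algebra sH mH oneH D e \<alpha> sA mA oneA \<rho> \<beta>"
    and total_integral: "total_integral sH oneH D \<alpha> sA oneA \<rho> \<beta> \<phi>"
    and coaction_commutes: "\<forall>g h. tensor_eq2 sH sA
           (map (\<lambda>(x, y). (mH g y, x)) (\<rho> (\<phi> h)))
           (map (\<lambda>(x, y). (mH y g, x)) (\<rho> (\<phi> h)))"
    and central: "\<forall>h. \<phi> h \<in> center mA"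
begin

lemma module_A: "module sA"
  using comodule_algebra by (simp add: hom_comodule_algebra_def hom_algebra_def)

lemma klin_\<beta>: "klin sA sA \<beta>"
  using comodule_algebra by (simp add: hom_comodule_algebra_def hom_algebra_def)

lemma bilin_multA: "bilin sA sA sA mA"
  using comodule_algebra by (simp add: hom_comodule_algebra_def hom_algebra_def)

lemma \<beta>_multA: "\<beta> (mA a b) = mA (\<beta> a) (\<beta> b)"
  using comodule_algebra by (simp add: hom_comodule_algebra_def hom_algebra_def)

lemma coaction_coassoc:
  "tensor_eq3 sA sH sH (concat (map (\<lambda>(x, y). map (\<lambda>(u, v). (u, v, \<alpha> y)) (\<rho> x)) (\<rho> m)))
                       (concat (map (\<lambda>(x, y). map (\<lambda>(p, q). (inv \<beta> x, p, q)) (D y)) (\<rho> m)))"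
  using comodule_algebra by (simp add: hom_comodule_algebra_def hom_comodule_def inv_\<alpha>)

lemma coaction_counit: "(\<Sum>(x, y)\<leftarrow>\<rho> m. sA (e y) x) = inv \<beta> m"
  using comodule_algebra by (simp add: hom_comodule_algebra_def hom_comodule_def)

lemma klin_\<phi>: "klin sH sA \<phi>"
  using total_integral by (simp add: total_integral_def)

lemma coaction_\<phi>: "tensor_eq2 sA sH (\<rho> (\<phi> h)) (map (\<lambda>(x, y). (\<phi> x, y)) (D h))"
  using total_integral by (simp add: total_integral_def)

lemma \<phi>_\<alpha>: "\<phi> (\<alpha> h) = \<beta> (\<phi> h)"
  using total_integral by (simp add: total_integral_def)

lemma \<phi>_one: "\<phi> oneH = oneA"
  using total_integral by (simp add: total_integral_def)

lemma \<phi>_central: "mA (\<phi> h) b = mA b (\<phi> h)"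
  using central by (simp add: center_def)

lemma \<beta>_inv [simp]: "\<beta> (inv \<beta> x) = x"
  using comodule_algebra by (meson bij_inv_eq_iff hom_algebra_def hom_comodule_algebra_def)

lemma coaction_coassoc_sum:
  assumes "module t" and "trilin sA sH sH t g"
  shows "(\<Sum>(x, y)\<leftarrow>\<rho> m. \<Sum>(u, v)\<leftarrow>\<rho> x. g u v (\<alpha> y)) = (\<Sum>(x, y)\<leftarrow>\<rho> m. \<Sum>(p, q)\<leftarrow>D y. g (inv \<beta> x) p q)"
  using tensor_eq3_sum_trilin[OF assms coaction_coassoc[of m]]
  by (simp del: map_map add: sum_list_concat_triples sum_list_map_triples sum_list_map_Pair)

lemma klin_\<phi>_comp: "klin s sH f \<Longrightarrow> klin s sA (\<lambda>x. \<phi> (f x))"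
  by (rule klin_comp[OF klin_\<phi>])

lemma klin_\<beta>_comp: "klin s sA f \<Longrightarrow> klin s sA (\<lambda>x. \<beta> (f x))"
  by (rule klin_comp[OF klin_\<beta>])

lemma klin_Sinv_comp: "klin s sH f \<Longrightarrow> klin s sH (\<lambda>x. Sinv (f x))"
  by (rule klin_comp[OF klin_Sinv])

definition \<theta> :: "'h \<Rightarrow> 'h \<Rightarrow> 'a" where
  "\<theta> g h = \<phi> (mH h (Sinv g))"

lemma bilin_\<theta>: "bilin sH sH sA \<theta>"
  unfolding \<theta>_def by (intro bilinI klin_\<phi>_comp klin_Sinv_comp klin_H_intros)

lemma \<theta>_\<alpha>: "\<theta> (\<alpha> g) (\<alpha> h) = \<beta> (\<theta> g h)"
  by (simp add: \<theta>_def Sinv_\<alpha> \<alpha>_mult[symmetric] \<phi>_\<alpha>)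

lemma \<theta>_normalized: "(\<Sum>(x, y)\<leftarrow>D h. \<theta> x y) = sA (e h) oneA"
proof -
  have "(\<Sum>(x, y)\<leftarrow>D h. \<theta> x y) = \<phi> (\<alpha> (\<Sum>(x, y)\<leftarrow>D h. umult y (Sinv x)))"
    by (simp add: \<theta>_def sum_list_klin[OF klin_\<phi>] sum_list_klin[OF klin_\<alpha>] mult_eq_\<alpha>_umult)
  then show ?thesis
    by (simp add: antipode_Sinv_left klin_scale[OF klin_\<alpha>] klin_scale[OF klin_\<phi>] \<alpha>_one \<phi>_one)
qed

lemma \<theta>_right_linear:
  "(\<Sum>(x, y)\<leftarrow>\<rho> a. \<Sum>(u, v)\<leftarrow>\<rho> x. mA (\<beta> (\<beta> u)) (\<theta> (mH (\<alpha> g) v) (mH (\<alpha> h) (\<alpha> y)))) = mA (\<theta> g h) a"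
proof -
  define \<Psi> where "\<Psi> u v w = mA (\<beta> (\<beta> u)) (\<phi> (umult (\<alpha> h) (umult w (umult (Sinv v) (\<alpha> (Sinv g))))))" for u v w
  have "trilin sA sH sH sA \<Psi>"
    unfolding \<Psi>_def
    by (intro trilinI klin_bilin_left[OF bilin_multA] klin_bilin_right[OF bilin_multA] klin_\<beta>_comp
        klin_\<phi>_comp klin_Sinv_comp klin_H_intros)
  have "mH (mH (\<alpha> h) (\<alpha> y)) (Sinv (mH (\<alpha> g) v)) = umult (\<alpha> h) (umult (\<alpha> y) (umult (Sinv v) (\<alpha> (Sinv g))))" for y v
    by (simp add: mult_eq_umult Sinv_umult Sinv_\<alpha> \<alpha>_umult)
  then have "(\<Sum>(x, y)\<leftarrow>\<rho> a. \<Sum>(u, v)\<leftarrow>\<rho> x. mA (\<beta> (\<beta> u)) (\<theta> (mH (\<alpha> g) v) (mH (\<alpha> h) (\<alpha> y))))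
      = (\<Sum>(x, y)\<leftarrow>\<rho> a. \<Sum>(u, v)\<leftarrow>\<rho> x. \<Psi> u v (\<alpha> y))"
    by (simp add: \<theta>_def \<Psi>_def)
  also have "\<dots> = (\<Sum>(x, y)\<leftarrow>\<rho> a. \<Sum>(p, q)\<leftarrow>D y. \<Psi> (inv \<beta> x) p q)"
    by (rule coaction_coassoc_sum[OF module_A \<open>trilin sA sH sH sA \<Psi>\<close>])
  also have "\<dots> = (\<Sum>(x, y)\<leftarrow>\<rho> a. mA (\<beta> x) (\<phi> (umult (\<alpha> h) (umult (\<Sum>(p, q)\<leftarrow>D y. umult q (Sinv p)) (\<alpha> (Sinv g))))))"
    by (simp add: \<Psi>_def sum_list_bilin_right[OF bilin_multA] sum_list_klin[OF klin_\<phi>]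
        sum_list_bilin_right[OF bilin_umult] sum_list_bilin_left[OF bilin_umult, symmetric])
  also have "\<dots> = (\<Sum>(x, y)\<leftarrow>\<rho> a. mA (\<beta> (sA (e y) x)) (\<phi> (umult (\<alpha> h) (\<alpha> (Sinv g)))))"
    by (simp add: antipode_Sinv_left bilin_scale_left[OF bilin_umult] bilin_scale_right[OF bilin_umult]
        klin_scale[OF klin_\<phi>] klin_scale[OF klin_\<beta>] bilin_scale_left[OF bilin_multA]
        bilin_scale_right[OF bilin_multA])
  also have "\<dots> = mA (\<theta> g h) a"
    by (simp add: sum_list_bilin_left[OF bilin_multA] sum_list_klin[OF klin_\<beta>] coaction_counit
        \<theta>_def mult_eq_umult \<phi>_central)
  finally show ?thesis .
qed

text \<open>Expanding \<open>\<rho> (\<theta> y (\<alpha> h))\<close> by colinearity of \<open>\<phi>\<close>, multiplicativity of \<open>D\<close> and the formula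
  for \<open>D \<circ> Sinv\<close> turns the coaction side of the colinearity condition into sums of these terms,
  to which coassociativity applies in the last three arguments.\<close>

definition \<theta>_summand :: "'h \<Rightarrow> 'h \<Rightarrow> 'h \<Rightarrow> 'h \<Rightarrow> ('a \<times> 'h) list" where
  "\<theta>_summand h x c d = concat (map (\<lambda>(a, b). [(\<beta> (\<phi> (mH a (Sinv d))), mH (\<alpha> b) (mH (Sinv c) x))]) (D (\<alpha> h)))"

lemma trilin_t2_\<theta>_summand: "trilin_t2 sH sH sH sA sH (\<theta>_summand h)"
  unfolding \<theta>_summand_def
  by (intro trilin_t2I klin_t2_concat klin_t2_tensor_left klin_t2_tensor_right klin_H_intros
      klin_Sinv_comp klin_\<beta>_comp klin_\<phi>_comp)

lemma coaction_\<theta>_commute: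
  "tensor_eq2 sA sH (map (\<lambda>(u, v). (\<beta> u, mH x v)) (\<rho> (\<theta> y (\<alpha> h))))
                    (map (\<lambda>(u, v). (\<beta> u, mH v x)) (\<rho> (\<phi> (mH (\<alpha> h) (Sinv y)))))"
proof -
  have "tensor_eq2 sH sA (map (\<lambda>(u, v). (mH x v, u)) (\<rho> (\<phi> (mH (\<alpha> h) (Sinv y)))))
      (map (\<lambda>(u, v). (mH v x, u)) (\<rho> (\<phi> (mH (\<alpha> h) (Sinv y)))))"
    using coaction_commutes by blast
  from tensor_eq2_map_swap[OF klin_id klin_\<beta> this] show ?thesis
    by (simp add: \<theta>_def comp_def case_prod_beta')
qed

lemma coaction_\<phi>_expand:
  "tensor_eq2 sA sH (map (\<lambda>(u, v). (\<beta> u, mH v x)) (\<rho> (\<phi> (mH (\<alpha> h) (Sinv y)))))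
                    (concat (map (\<lambda>(c, d). \<theta>_summand h (\<alpha> x) c d) (D y)))"
proof -
  have right: "klin sH sH (\<lambda>q. mH q x)" by (intro klin_H_intros)
  have left: "klin sH sA (\<lambda>p. \<beta> (\<phi> p))" by (intro klin_\<beta>_comp klin_\<phi>_comp klin_id)
  have "tensor_eq2 sA sH (map (\<lambda>(u, v). (\<beta> u, mH v x)) (\<rho> (\<phi> (mH (\<alpha> h) (Sinv y)))))
      (map (\<lambda>(p, q). (\<beta> (\<phi> p), mH q x)) (D (mH (\<alpha> h) (Sinv y))))"
    using tensor_eq2_map_pairs[OF klin_\<beta> right coaction_\<phi>] by (simp add: comp_def case_prod_beta')
  also have "tensor_eq2 sA sH \<dots> (map (\<lambda>(p, q). (\<beta> (\<phi> p), mH q x))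
      (concat (map (\<lambda>(a, b). map (\<lambda>(c', d'). (mH a c', mH b d')) (D (Sinv y))) (D (\<alpha> h)))))"
    by (rule tensor_eq2_map_pairs[OF left right D_mult])
  also have "tensor_eq2 sA sH \<dots> (map (\<lambda>(p, q). (\<beta> (\<phi> p), mH q x))
      (concat (map (\<lambda>(a, b). map (\<lambda>(c', d'). (mH a c', mH b d')) (map (\<lambda>(c, d). (Sinv d, Sinv c)) (D y))) (D (\<alpha> h)))))"
    by (intro tensor_eq2_map_pairs[OF left right] tensor_eq2_concat, clarify)
       (rule tensor_eq2_map_pairs[OF klin_bilin_right[OF bilin_mult klin_id]
          klin_bilin_right[OF bilin_mult klin_id] coprod_Sinv])
  also have "tensor_eq2 sA sH \<dots> (concat (map (\<lambda>(a, b). concat (map (\<lambda>(c, d).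
      [(\<beta> (\<phi> (mH a (Sinv d))), mH (\<alpha> b) (mH (Sinv c) (\<alpha> x)))]) (D y))) (D (\<alpha> h))))"
    by (simp add: map_concat comp_def case_prod_beta' mult_hom_assoc concat_map_singleton_pairs tensor_eq2_refl)
  also have "tensor_eq2 sA sH \<dots> (concat (map (\<lambda>(c, d). \<theta>_summand h (\<alpha> x) c d) (D y)))"
    unfolding \<theta>_summand_def by (rule tensor_eq2_concat_swap)
  finally show ?thesis .
qed

lemma \<theta>_summand_contract:
  "tensor_eq2 sA sH (concat (map (\<lambda>(c, d). \<theta>_summand h c d (\<alpha> y)) (D x)))
     (concat (map (\<lambda>(a, b). [(\<beta> (\<phi> (mH a (Sinv (\<alpha> (sH (e x) y))))), b)]) (D (\<alpha> h))))"
proof -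
  have "tensor_eq2 sA sH (concat (map (\<lambda>(c, d). \<theta>_summand h c d (\<alpha> y)) (D x)))
      (concat (map (\<lambda>(a, b). concat (map (\<lambda>(c, d).
         [(\<beta> (\<phi> (mH a (Sinv (\<alpha> y)))), mH (\<alpha> b) (mH (Sinv d) c))]) (D x))) (D (\<alpha> h))))"
    unfolding \<theta>_summand_def by (rule tensor_eq2_concat_swap)
  also have "tensor_eq2 sA sH \<dots> (concat (map (\<lambda>(a, b). [(\<beta> (\<phi> (mH a (Sinv (\<alpha> (sH (e x) y))))), b)]) (D (\<alpha> h))))"
  proof (rule tensor_eq2_concat, clarify)
    fix a b
    have "(\<Sum>(c, d)\<leftarrow>D x. mH (Sinv d) c) = sH (e x) oneH"
      by (simp add: mult_eq_\<alpha>_umult sum_list_klin[OF klin_\<alpha>] antipode_Sinv_right klin_scale[OF klin_\<alpha>] \<alpha>_one)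
    then have "(\<Sum>(c, d)\<leftarrow>D x. mH (\<alpha> b) (mH (Sinv d) c)) = sH (e x) b"
      by (simp add: sum_list_bilin_right[OF bilin_mult] bilin_scale_right[OF bilin_mult] mult_one_right)
    then have sum: "tensor_eq2 sA sH
        (concat (map (\<lambda>(c, d). [(\<beta> (\<phi> (mH a (Sinv (\<alpha> y)))), mH (\<alpha> b) (mH (Sinv d) c))]) (D x)))
        [(\<beta> (\<phi> (mH a (Sinv (\<alpha> y)))), sH (e x) b)]"
      using tensor_eq2_sum_right[of sA sH "\<beta> (\<phi> (mH a (Sinv (\<alpha> y))))" "\<lambda>c d. mH (\<alpha> b) (mH (Sinv d) c)" "D x"]
      by simp
    have "sA (e x) (\<beta> (\<phi> (mH a (Sinv (\<alpha> y))))) = \<beta> (\<phi> (mH a (Sinv (\<alpha> (sH (e x) y)))))"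
      by (simp add: klin_scale[OF klin_\<alpha>] klin_scale[OF klin_Sinv] bilin_scale_right[OF bilin_mult]
          klin_scale[OF klin_\<phi>] klin_scale[OF klin_\<beta>])
    then have "tensor_eq2 sA sH [(\<beta> (\<phi> (mH a (Sinv (\<alpha> y)))), sH (e x) b)]
        [(\<beta> (\<phi> (mH a (Sinv (\<alpha> (sH (e x) y))))), b)]"
      using tensor_eq2_scale_swap[of sA sH "\<beta> (\<phi> (mH a (Sinv (\<alpha> y))))" "e x" b] by simp
    with sum show "tensor_eq2 sA sH
        (concat (map (\<lambda>(c, d). [(\<beta> (\<phi> (mH a (Sinv (\<alpha> y)))), mH (\<alpha> b) (mH (Sinv d) c))]) (D x)))
        [(\<beta> (\<phi> (mH a (Sinv (\<alpha> (sH (e x) y))))), b)]"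
      by (rule tensor_eq2_trans)
  qed
  finally show ?thesis .
qed

lemma \<theta>_coaction:
  "tensor_eq2 sA sH (map (\<lambda>(x, y). (\<theta> (\<alpha> g) x, \<alpha> y)) (D h))
     (concat (map (\<lambda>(x, y). map (\<lambda>(u, v). (\<beta> u, mH x v)) (\<rho> (\<theta> y (\<alpha> h)))) (D g)))"
proof -
  have "tensor_eq2 sA sH (concat (map (\<lambda>(x, y). map (\<lambda>(u, v). (\<beta> u, mH x v)) (\<rho> (\<theta> y (\<alpha> h)))) (D g)))
      (concat (map (\<lambda>(x, y). concat (map (\<lambda>(c, d). \<theta>_summand h (\<alpha> x) c d) (D y))) (D g)))"
    by (intro tensor_eq2_concat, clarify) (rule tensor_eq2_trans[OF coaction_\<theta>_commute coaction_\<phi>_expand])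
  also have "tensor_eq2 sA sH \<dots> (concat (map (\<lambda>(x, y). concat (map (\<lambda>(c, d). \<theta>_summand h c d (\<alpha> y)) (D x))) (D g)))"
    by (rule coassoc_concat[OF trilin_t2_\<theta>_summand])
  also have "tensor_eq2 sA sH \<dots> (concat (map (\<lambda>(x, y).
      concat (map (\<lambda>(a, b). [(\<beta> (\<phi> (mH a (Sinv (\<alpha> (sH (e x) y))))), b)]) (D (\<alpha> h)))) (D g)))"
    by (intro tensor_eq2_concat, clarify) (rule \<theta>_summand_contract)
  also have "tensor_eq2 sA sH \<dots> (concat (map (\<lambda>(a, b).
      concat (map (\<lambda>(x, y). [(\<beta> (\<phi> (mH a (Sinv (\<alpha> (sH (e x) y))))), b)]) (D g))) (D (\<alpha> h))))"
    by (rule tensor_eq2_concat_swap)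
  also have "tensor_eq2 sA sH \<dots> (concat (map (\<lambda>(a, b). [(\<beta> (\<phi> (mH a (Sinv g))), b)]) (D (\<alpha> h))))"
  proof (rule tensor_eq2_concat, clarify)
    fix a b
    have "(\<Sum>(x, y)\<leftarrow>D g. \<beta> (\<phi> (mH a (Sinv (\<alpha> (sH (e x) y)))))) = \<beta> (\<phi> (mH a (Sinv g)))"
      by (simp add: sum_list_klin[OF klin_\<beta>] sum_list_klin[OF klin_\<phi>] sum_list_bilin_right[OF bilin_mult]
          sum_list_klin[OF klin_Sinv] sum_list_klin[OF klin_\<alpha>] counit_left)
    then show "tensor_eq2 sA sH (concat (map (\<lambda>(x, y). [(\<beta> (\<phi> (mH a (Sinv (\<alpha> (sH (e x) y))))), b)]) (D g)))
        [(\<beta> (\<phi> (mH a (Sinv g))), b)]"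
      using tensor_eq2_sum_left[of sA sH "\<lambda>x y. \<beta> (\<phi> (mH a (Sinv (\<alpha> (sH (e x) y)))))" b "D g"] by simp
  qed
  also have "tensor_eq2 sA sH \<dots> (map (\<lambda>(x, y). (\<theta> (\<alpha> g) x, \<alpha> y)) (D h))"
    using tensor_eq2_map_pairs[OF klin_\<beta>_comp[OF klin_\<phi>_comp[OF klin_bilin_left[OF bilin_mult klin_id]]] klin_id D_\<alpha>[of h]]
    by (simp add: concat_map_singleton_pairs comp_def case_prod_beta' \<theta>_def \<phi>_\<alpha>[symmetric] \<alpha>_mult Sinv_\<alpha>)
  finally show ?thesis by (rule tensor_eq2_sym)
qed

end

theorem theorem5p4:
  fixes sH :: "'k::comm_ring_1 \<Rightarrow> 'h::ab_group_add \<Rightarrow> 'h"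
    and mH :: "'h \<Rightarrow> 'h \<Rightarrow> 'h" and oneH :: 'h
    and D :: "'h \<Rightarrow> ('h \<times> 'h) list" and e :: "'h \<Rightarrow> 'k"
    and S :: "'h \<Rightarrow> 'h" and \<alpha> :: "'h \<Rightarrow> 'h"
    and sA :: "'k \<Rightarrow> 'a::ab_group_add \<Rightarrow> 'a"
    and mA :: "'a \<Rightarrow> 'a \<Rightarrow> 'a" and oneA :: 'a
    and \<rho> :: "'a \<Rightarrow> ('a \<times> 'h) list" and \<beta> :: "'a \<Rightarrow> 'a"
    and \<phi> :: "'h \<Rightarrow> 'a"
  assumes "hom_hopf sH mH oneH D e S \<alpha>"
    and "bij S"
    and "hom_comodule_algebra sH mH oneH D e \<alpha> sA mA oneA \<rho> \<beta>"
    and "total_integral sH oneH D \<alpha> sA oneA \<rho> \<beta> \<phi>"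
    and "\<forall>g h. tensor_eq2 sH sA
           (map (\<lambda>(x, y). (mH g y, x)) (\<rho> (\<phi> h)))
           (map (\<lambda>(x, y). (mH y g, x)) (\<rho> (\<phi> h)))"
    and "\<forall>h. \<phi> h \<in> center mA"
  shows "normalized_integral sH mH D e \<alpha> sA mA oneA \<rho> \<beta> (\<lambda>g h. \<phi> (mH h (inv S g)))"
proof -
  interpret central_total_integral sH mH oneH D e S \<alpha> sA mA oneA \<rho> \<beta> \<phi>
    using assms by (unfold_locales)
  have \<theta>_eq: "(\<lambda>g h. \<phi> (mH h (inv S g))) = \<theta>"
    by (simp add: fun_eq_iff \<theta>_def Sinv_def)
  show ?thesis
    unfolding normalized_integral_def inv_\<alpha> \<theta>_eq
    using bilin_\<theta> \<theta>_\<alpha> \<theta>_coaction \<theta>_normalized \<theta>_right_linear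
    by (simp add: sum_list_concat_map comp_def case_prod_beta')
qed

end
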